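(* Let $\mathbf{k}$ be an algebraically closed field of characteristic zero, $\mathcal{A}=\mathbf{k}[x_1,\ldots,x_n]$, $\mathcal{V}=\bigoplus_{i=1}^n\mathcal{A}\frac{\partial}{\partial x_i}$, $\mathcal{L}_+\subset\mathcal{V}$ the subalgebra of vector fields vanishing at the origin, and $\mathcal{D}$ the Weyl algebra. The map $\varphi:\mathcal{A}\# U(\mathcal{V})\to\mathcal{D}\otimes U(\mathcal{L}_+)$ defined on $\mathcal{A}$ as the natural embedding $f\mapsto f\otimes 1$ and on $\mathcal{V}$ by $$\varphi\left(x^k\frac{\partial}{\partial x_p}\right)=x^k\frac{\partial}{\partial x_p}\otimes 1+\sum_{0<m\leq k}\binom{k}{m}x^{k-m}\otimes x^m\frac{\partial}{\partial x_p}$$ extends to a (well-defined) homomorphism of associative algebras.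
   Context: Multi-index notation: $x^k=x_1^{k_1}\cdots x_n^{k_n}$; $0<m\le k$ means $m\le k$ componentwise and $m\neq0$; $\binom{k}{m}=\prod_i\binom{k_i}{m_i}$. $\mathcal{L}_+$ is spanned by $x^m\frac{\partial}{\partial x_p}$ with $m\ne 0$. The smash product $\mathcal{A}\# U(\mathcal{V})$ is $\mathcal{A}\otimes U(\mathcal{V})$ with product $(f\# u)(g\# v)=\sum_i f\,u_i^{(1)}(g)\# u_i^{(2)}v$ where $\Delta(u)=\sum_i u_i^{(1)}\otimes u_i^{(2)}$ is the coproduct; in particular $(1\#\eta)(f\#1)=f\#\eta+\eta(f)\#1$ for $\eta\in\mathcal{V}$, $f\in\mathcal{A}$. It is generated by $\mathcal{A}$ and $\mathcal{V}$. *)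

theory Defs
  imports "HOL-Library.Poly_Mapping" "HOL-Algebra.QuotRing"
          "HOL-Computational_Algebra.Polynomial"
begin

declare [[typedef_overloaded]]

definition alg_closed :: "'k::field itself \<Rightarrow> bool" where
  "alg_closed _ \<longleftrightarrow> (\<forall>p :: 'k poly. degree p \<ge> 1 \<longrightarrow> (\<exists>x. poly p x = 0))"

datatype 'g fword = FW "'g list"

fun fw_list :: "'g fword \<Rightarrow> 'g list" where "fw_list (FW xs) = xs"

instantiation fword :: (type) monoid_add
begin
definition zero_fword :: "'a fword" where "zero_fword = FW []"
definition plus_fword :: "'a fword \<Rightarrow> 'a fword \<Rightarrow> 'a fword" where
  "plus_fword a b = FW (fw_list a @ fw_list b)"
instance
proof
  fix a b c :: "'a fword"
  show "a + b + c = a + (b + c)" by (cases a; cases b; cases c) (simp add: plus_fword_def)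
  show "0 + a = a" by (cases a) (simp add: plus_fword_def zero_fword_def)
  show "a + 0 = a" by (cases a) (simp add: plus_fword_def zero_fword_def)
qed
end

text \<open>The free associative (noncommutative) 'k-algebra on generators of type 'g:
  finitely supported 'k-valued functions on words, with convolution product.\<close>
type_synonym ('g, 'k) falg = "'g fword \<Rightarrow>\<^sub>0 'k"

definition gen :: "'g \<Rightarrow> ('g, 'k::semiring_1) falg" where
  "gen g = Poly_Mapping.single (FW [g]) 1"

definition scal :: "'k::semiring_1 \<Rightarrow> ('g, 'k) falg" where
  "scal c = Poly_Mapping.single 0 c"

definition cls_ring :: "'a::ring_1 ring" where
  "cls_ring = \<lparr>carrier = UNIV, monoid.mult = (*), one = 1, ring.zero = 0, add = (+)\<rparr>"

definition presented :: "('g, 'k::comm_ring_1) falg set \<Rightarrow> ('g, 'k) falg set ring" where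
  "presented R = cls_ring Quot (genideal cls_ring R)"

definition cls :: "('g, 'k::comm_ring_1) falg set \<Rightarrow> ('g, 'k) falg \<Rightarrow> ('g, 'k) falg set" where
  "cls R a = genideal cls_ring R +>\<^bsub>cls_ring\<^esub> a"

text \<open>\<A> = k[x_i : i in 'n], polynomials as finitely supported functions on monomial
  exponents (multi-indices, finitely supported 'n to nat).\<close>
type_synonym ('n, 'k) mpoly = "('n \<Rightarrow>\<^sub>0 nat) \<Rightarrow>\<^sub>0 'k"

definition smult_mp :: "'k::comm_ring_1 \<Rightarrow> ('n, 'k) mpoly \<Rightarrow> ('n, 'k) mpoly" where
  "smult_mp c f = Poly_Mapping.single 0 c * f"

definition pd :: "'n \<Rightarrow> ('n, 'k::comm_ring_1) mpoly \<Rightarrow> ('n, 'k) mpoly" where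
  "pd i f = (\<Sum>e\<in>Poly_Mapping.keys f. Poly_Mapping.single (e - Poly_Mapping.single i (1::nat))
                                              (of_nat (Poly_Mapping.lookup e i) * Poly_Mapping.lookup f e))"

text \<open>Vector fields \<V> = (+)_i \<A> d/dx_i, as the tuple of coefficient polynomials.\<close>
type_synonym ('n, 'k) vfield = "'n \<Rightarrow> ('n, 'k) mpoly"

definition act :: "('n::finite, 'k::comm_ring_1) vfield \<Rightarrow> ('n, 'k) mpoly \<Rightarrow> ('n, 'k) mpoly" where
  "act \<eta> f = (\<Sum>p\<in>UNIV. \<eta> p * pd p f)"

definition lie :: "('n::finite, 'k::comm_ring_1) vfield \<Rightarrow> ('n, 'k) vfield \<Rightarrow> ('n, 'k) vfield" where
  "lie \<eta> \<xi> = (\<lambda>p. act \<eta> (\<xi> p) - act \<xi> (\<eta> p))"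

definition smult_vf :: "'k::comm_ring_1 \<Rightarrow> ('n, 'k) vfield \<Rightarrow> ('n, 'k) vfield" where
  "smult_vf c \<eta> = (\<lambda>p. smult_mp c (\<eta> p))"

definition vfm :: "('n \<Rightarrow>\<^sub>0 nat) \<Rightarrow> 'n \<Rightarrow> ('n, 'k::comm_ring_1) vfield" where
  "vfm k p = (\<lambda>q. if q = p then Poly_Mapping.single k 1 else 0)"

text \<open>\<L>_+ : vector fields vanishing at the origin (all coefficients have zero constant term).\<close>
typedef ('n, 'k) lplus = "{\<eta> :: ('n, 'k::zero) vfield. \<forall>p. Poly_Mapping.lookup (\<eta> p) 0 = 0}"
  morphisms Rep_lp Abs_lp
  by (rule exI[of _ "\<lambda>p. 0"]) simp

datatype ('n, 'k) sgen = GA "('n, 'k) mpoly" | GV "('n, 'k) vfield"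

definition smash_rel :: "(('n::finite, 'k::comm_ring_1) sgen, 'k) falg set" where
  "smash_rel =
     {gen (GA (f + g)) - gen (GA f) - gen (GA g) | f g. True}
   \<union> {gen (GA (smult_mp c f)) - scal c * gen (GA f) | c f. True}
   \<union> {gen (GA (f * g)) - gen (GA f) * gen (GA g) | f g. True}
   \<union> {gen (GA 1) - 1}
   \<union> {gen (GV (\<lambda>p. \<eta> p + \<xi> p)) - gen (GV \<eta>) - gen (GV \<xi>) | \<eta> \<xi>. True}
   \<union> {gen (GV (smult_vf c \<eta>)) - scal c * gen (GV \<eta>) | c \<eta>. True}
   \<union> {gen (GV \<eta>) * gen (GV \<xi>) - gen (GV \<xi>) * gen (GV \<eta>) - gen (GV (lie \<eta> \<xi>)) | \<eta> \<xi>. True}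
   \<union> {gen (GV \<eta>) * gen (GA f) - gen (GA f) * gen (GV \<eta>) - gen (GA (act \<eta> f)) | \<eta> f. True}"

definition SmashAlg :: "(('n::finite, 'k::comm_ring_1) sgen, 'k) falg set ring" where
  "SmashAlg = presented smash_rel"

datatype ('n, 'k) tgen = Tx 'n | Td 'n | TL "('n, 'k) lplus"

definition target_rel :: "(('n::finite, 'k::comm_ring_1) tgen, 'k) falg set" where
  "target_rel =
     \<comment> \<open>Weyl algebra \<D>\<close>
     {gen (Tx i) * gen (Tx j) - gen (Tx j) * gen (Tx i) | i j. True}
   \<union> {gen (Td i) * gen (Td j) - gen (Td j) * gen (Td i) | i j. True}
   \<union> {gen (Td i) * gen (Tx j) - gen (Tx j) * gen (Td i) - (if i = j then 1 else 0) | i j. True}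
     \<comment> \<open>U(\<L>_+)\<close>
   \<union> {gen (TL (Abs_lp (\<lambda>p. Rep_lp a p + Rep_lp b p))) - gen (TL a) - gen (TL b) | a b. True}
   \<union> {gen (TL (Abs_lp (smult_vf c (Rep_lp a)))) - scal c * gen (TL a) | c a. True}
   \<union> {gen (TL a) * gen (TL b) - gen (TL b) * gen (TL a) - gen (TL (Abs_lp (lie (Rep_lp a) (Rep_lp b)))) | a b. True}
     \<comment> \<open>the two tensor factors commute\<close>
   \<union> {gen (Tx i) * gen (TL a) - gen (TL a) * gen (Tx i) | i a. True}
   \<union> {gen (Td i) * gen (TL a) - gen (TL a) * gen (Td i) | i a. True}"

definition TargetAlg :: "(('n::finite, 'k::comm_ring_1) tgen, 'k) falg set ring" where
  "TargetAlg = presented target_rel"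

text \<open>An enumeration of the variables (the x_i commute in \<D>, so the order is irrelevant).\<close>
definition idx_list :: "'n::finite list" where
  "idx_list = (SOME xs. distinct xs \<and> set xs = UNIV)"

definition wmono :: "('n::finite \<Rightarrow>\<^sub>0 nat) \<Rightarrow> (('n, 'k::comm_ring_1) tgen, 'k) falg" where
  "wmono k = prod_list (map (\<lambda>i. gen (Tx i) ^ Poly_Mapping.lookup k i) idx_list)"

definition embA :: "('n::finite, 'k::comm_ring_1) mpoly \<Rightarrow> (('n, 'k) tgen, 'k) falg" where
  "embA f = (\<Sum>k\<in>Poly_Mapping.keys f. scal (Poly_Mapping.lookup f k) * wmono k)"

definition mchoose :: "('n::finite \<Rightarrow>\<^sub>0 nat) \<Rightarrow> ('n \<Rightarrow>\<^sub>0 nat) \<Rightarrow> nat" where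
  "mchoose k m = (\<Prod>i\<in>UNIV. Poly_Mapping.lookup k i choose Poly_Mapping.lookup m i)"

definition phiV :: "('n::finite \<Rightarrow>\<^sub>0 nat) \<Rightarrow> 'n \<Rightarrow> (('n, 'k::comm_ring_1) tgen, 'k) falg" where
  "phiV k p = wmono k * gen (Td p)
     + (\<Sum>m\<in>{m. m \<noteq> 0 \<and> (\<forall>i. Poly_Mapping.lookup m i \<le> Poly_Mapping.lookup k i)}.
          scal (of_nat (mchoose k m)) * wmono (k - m) * gen (TL (Abs_lp (vfm m p))))"

end

theory Submission
  imports Defs
begin

(* The prescribed images of the generators of A # U(V) are extended to the free algebra, and one
   checks that every defining relation of the smash product is mapped into the ideal of relations of
   D (x) U(L+); turning that quotient into a type makes the check a computation in an ordinary ring.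
   All relations are additive in each argument, so it suffices to check them on monomials x^l and on
   monomial vector fields x^k d_p. The relations of A reduce to x^k x^l = x^(k+l); the relation
   [phi(x^k d_p), x^l] = l_p x^(k+l-e_p) follows from the Weyl relations; and in
     [phi(x^k d_p), phi(x^l d_q)] = l_p phi(x^(k+l-e_p) d_q) - k_q phi(x^(l+k-e_q) d_p)
   the U(L+)-components match by the weighted Vandermonde identity
     sum_{m+m'=j+e_p} C(k,m) C(l,m') m'_p = l_p C(k+l-e_p, j). *)

section \<open>Presented algebras\<close>

lemma cls_ring_simps [simp]:
  "carrier cls_ring = UNIV" "monoid.mult cls_ring = (*)" "add cls_ring = (+)"
  "one cls_ring = 1" "zero cls_ring = 0"
  by (simp_all add: cls_ring_def)

lemma ring_cls_ring: "ring (cls_ring :: 'a::ring_1 ring)"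
proof (rule ringI)
  show "abelian_group (cls_ring :: 'a ring)"
    by (rule abelian_groupI) (auto simp: algebra_simps intro: exI[of _ "- _"])
  show "monoid (cls_ring :: 'a ring)"
    by (rule monoidI) (auto simp: mult.assoc)
qed (auto simp: algebra_simps)

lemma a_inv_cls_ring [simp]: "a_inv cls_ring x = - (x::'a::ring_1)"
proof -
  interpret ring "cls_ring :: 'a ring" by (rule ring_cls_ring)
  show ?thesis by (rule minus_equality) auto
qed

lemma a_minus_cls_ring [simp]: "a_minus cls_ring x y = x - (y::'a::ring_1)"
  by (simp add: a_minus_def)

lemma ideal_genideal_cls_ring: "ideal (genideal cls_ring R) (cls_ring :: 'a::ring_1 ring)"
proof -
  interpret ring "cls_ring :: 'a ring" by (rule ring_cls_ring)
  show ?thesis by (rule genideal_ideal) auto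
qed

context
  fixes R :: "'a::ring_1 set"
begin

interpretation ideal "genideal cls_ring R" "cls_ring :: 'a ring"
  by (rule ideal_genideal_cls_ring)

lemma genideal_cls_ring_zero: "0 \<in> genideal cls_ring R"
  using additive_subgroup.zero_closed[OF is_additive_subgroup] by simp

lemma genideal_cls_ring_add: "a \<in> genideal cls_ring R \<Longrightarrow> b \<in> genideal cls_ring R \<Longrightarrow> a + b \<in> genideal cls_ring R"
  using additive_subgroup.a_closed[OF is_additive_subgroup] by simp

lemma genideal_cls_ring_lmult: "a \<in> genideal cls_ring R \<Longrightarrow> x * a \<in> genideal cls_ring R"
  using I_l_closed[of a x] by simp

lemma genideal_cls_ring_rmult: "a \<in> genideal cls_ring R \<Longrightarrow> a * x \<in> genideal cls_ring R"
  using I_r_closed[of a x] by simp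

lemma genideal_cls_ring_uminus: "a \<in> genideal cls_ring R \<Longrightarrow> - a \<in> genideal cls_ring R"
  using genideal_cls_ring_lmult[of a "- 1"] by simp

end

lemma genideal_cls_ring_self: "r \<in> R \<Longrightarrow> r \<in> genideal cls_ring (R :: 'a::ring_1 set)"
proof -
  interpret ring "cls_ring :: 'a ring" by (rule ring_cls_ring)
  show "r \<in> R \<Longrightarrow> r \<in> genideal cls_ring R" using genideal_self[of R] by auto
qed

lemma genideal_cls_ring_minimal:
  assumes "ideal I (cls_ring :: 'a::ring_1 ring)" "R \<subseteq> I" shows "genideal cls_ring R \<subseteq> I"
proof -
  interpret ring "cls_ring :: 'a ring" by (rule ring_cls_ring)
  show ?thesis by (rule genideal_minimal[OF assms])
qed

lemma cls_eq_iff: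
  fixes R :: "('g, 'k::comm_ring_1) falg set"
  shows "cls R a = cls R b \<longleftrightarrow> a - b \<in> genideal cls_ring R"
proof -
  interpret ideal "genideal cls_ring R" "cls_ring :: ('g, 'k) falg ring"
    by (rule ideal_genideal_cls_ring)
  have "cls R a = cls R b \<longleftrightarrow> a \<in> genideal cls_ring R +>\<^bsub>cls_ring\<^esub> b"
    unfolding cls_def using a_repr_independence'[of a b] a_repr_independenceD[of a b] by auto
  also have "\<dots> \<longleftrightarrow> a - b \<in> genideal cls_ring R"
    using a_rcos_module_minus[OF ring_axioms, of b a] by simp
  finally show ?thesis .
qed

context
  fixes R :: "('g, 'k::comm_ring_1) falg set"
begin

interpretation ideal "genideal cls_ring R" "cls_ring :: ('g, 'k) falg ring"
  by (rule ideal_genideal_cls_ring)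

lemma carrier_presented: "carrier (presented R) = range (cls R)"
  unfolding presented_def FactRing_def cls_def A_RCOSETS_def' by auto

lemma mult_presented: "cls R a \<otimes>\<^bsub>presented R\<^esub> cls R b = cls R (a * b)"
  unfolding presented_def FactRing_def cls_def using rcoset_mult_add[of a b] by simp

lemma add_presented: "cls R a \<oplus>\<^bsub>presented R\<^esub> cls R b = cls R (a + b)"
  unfolding presented_def FactRing_def cls_def using a_rcos_sum[of a b] by simp

lemma one_presented: "\<one>\<^bsub>presented R\<^esub> = cls R 1"
  unfolding presented_def FactRing_def cls_def by simp

end

lemma presented_hom_exists:
  fixes RS :: "('g, 'k::comm_ring_1) falg set" and RT :: "('h, 'k) falg set"
  assumes add: "\<And>a b. F (a + b) = F a + F b"
    and mult: "\<And>a b. F (a * b) = F a * F b"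
    and one: "F 1 = 1"
    and relators: "\<And>r. r \<in> RS \<Longrightarrow> F r \<in> genideal cls_ring RT"
  shows "\<exists>\<phi>. \<phi> \<in> ring_hom (presented RS) (presented RT) \<and> (\<forall>a. \<phi> (cls RS a) = cls RT (F a))"
proof -
  have F_diff: "F (a - b) = F a - F b" for a b
    using add[of "a - b" b] by (simp add: algebra_simps)
  define I where "I = {a. F a \<in> genideal cls_ring RT}"
  have "ideal I (cls_ring :: ('g, 'k) falg ring)"
  proof (rule idealI[OF ring_cls_ring])
    interpret ring "cls_ring :: ('g, 'k) falg ring" by (rule ring_cls_ring)
    show "subgroup I (add_monoid (cls_ring :: ('g, 'k) falg ring))"
    proof (rule add.subgroupI)
      show "I \<noteq> {}"
        using F_diff[of 0 0] genideal_cls_ring_zero[of RT] by (auto simp: I_def intro!: exI[of _ 0])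
      show "\<ominus>\<^bsub>cls_ring\<^esub> a \<in> I" if "a \<in> I" for a
        using that F_diff[of 0 a] F_diff[of 0 0] genideal_cls_ring_uminus by (simp add: I_def)
    qed (auto simp: I_def add genideal_cls_ring_add)
  qed (simp_all add: I_def mult genideal_cls_ring_lmult genideal_cls_ring_rmult)
  then have kernel: "genideal cls_ring RS \<subseteq> I"
    by (rule genideal_cls_ring_minimal) (auto simp: I_def relators)
  define \<phi> where "\<phi> X = cls RT (F (SOME a. X = cls RS a))" for X
  have \<phi>_cls: "\<phi> (cls RS a) = cls RT (F a)" for a
  proof -
    define b where "b = (SOME b. cls RS a = cls RS b)"
    have "cls RS a = cls RS b" unfolding b_def by (rule someI_ex) blast
    then have "F a - F b \<in> genideal cls_ring RT"
      using kernel by (auto simp: cls_eq_iff I_def F_diff)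
    then have "cls RT (F b) = cls RT (F a)"
      by (metis cls_eq_iff)
    then show ?thesis by (simp add: \<phi>_def b_def)
  qed
  have "\<phi> \<in> ring_hom (presented RS) (presented RT)"
    by (rule ring_hom_memI)
      (auto simp: carrier_presented mult_presented add_presented one_presented \<phi>_cls mult add one)
  with \<phi>_cls show ?thesis by blast
qed

definition ideal_cong :: "'a::ring_1 set \<Rightarrow> 'a \<Rightarrow> 'a \<Rightarrow> bool" where
  "ideal_cong R a b \<longleftrightarrow> a - b \<in> genideal cls_ring R"

lemma equivp_ideal_cong: "equivp (ideal_cong R)"
proof (rule equivpI)
  show "reflp (ideal_cong R)"
    by (rule reflpI) (simp add: ideal_cong_def genideal_cls_ring_zero)
  show "symp (ideal_cong R)"
    by (rule sympI) (metis ideal_cong_def genideal_cls_ring_uminus minus_diff_eq)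
  show "transp (ideal_cong R)"
    by (rule transpI) (unfold ideal_cong_def, drule (1) genideal_cls_ring_add, simp)
qed

lemma ideal_cong_add: "ideal_cong R a b \<Longrightarrow> ideal_cong R c d \<Longrightarrow> ideal_cong R (a + c) (b + d)"
  using genideal_cls_ring_add[of "a - b" R "c - d"] by (simp add: ideal_cong_def algebra_simps)

lemma ideal_cong_uminus: "ideal_cong R a b \<Longrightarrow> ideal_cong R (- a) (- b)"
  using genideal_cls_ring_uminus[of "a - b" R] by (simp add: ideal_cong_def algebra_simps)

lemma ideal_cong_mult: "ideal_cong R a b \<Longrightarrow> ideal_cong R c d \<Longrightarrow> ideal_cong R (a * c) (b * d)"
  using genideal_cls_ring_add[OF genideal_cls_ring_rmult[of "a - b" R c] genideal_cls_ring_lmult[of "c - d" R b]]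
  by (simp add: ideal_cong_def algebra_simps)

section \<open>Maps out of free algebras\<close>

lemma scal_0 [simp]: "scal 0 = 0"
  and scal_1 [simp]: "scal 1 = 1"
  and scal_add: "scal (a + b) = scal a + scal b"
  and scal_uminus: "scal (- a) = - scal a"
  and scal_mult: "scal (a * b) = scal a * scal b"
  by (simp_all add: scal_def single_add single_uminus mult_single)

lemma scal_sum: "scal (sum f A) = (\<Sum>a\<in>A. scal (f a) :: ('g, 'k::comm_ring_1) falg)"
  by (induction A rule: infinite_finite_induct) (simp_all add: scal_add)

lemma poly_mapping_sum_single: "x = (\<Sum>w\<in>Poly_Mapping.keys x. Poly_Mapping.single w (Poly_Mapping.lookup x w))"
  by (rule poly_mapping_eqI) (auto simp: lookup_sum lookup_single when_def in_keys_iff)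

lemma scal_commute: "scal c * x = x * (scal c :: ('g, 'k::comm_ring_1) falg)"
proof -
  have "scal c * x = (\<Sum>w\<in>Poly_Mapping.keys x. scal c * Poly_Mapping.single w (Poly_Mapping.lookup x w))"
    by (subst poly_mapping_sum_single[of x]) (simp add: sum_distrib_left)
  also have "\<dots> = (\<Sum>w\<in>Poly_Mapping.keys x. Poly_Mapping.single w (Poly_Mapping.lookup x w) * scal c)"
    by (simp add: scal_def mult_single algebra_simps)
  also have "\<dots> = x * scal c"
    by (subst (3) poly_mapping_sum_single[of x]) (simp add: sum_distrib_right)
  finally show ?thesis .
qed

definition word_image :: "('g \<Rightarrow> ('h, 'k::comm_ring_1) falg) \<Rightarrow> 'g fword \<Rightarrow> ('h, 'k) falg" where
  "word_image h w = prod_list (map h (fw_list w))"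

definition falg_lift :: "('g \<Rightarrow> ('h, 'k::comm_ring_1) falg) \<Rightarrow> ('g, 'k) falg \<Rightarrow> ('h, 'k) falg" where
  "falg_lift h a = (\<Sum>w\<in>Poly_Mapping.keys a. scal (Poly_Mapping.lookup a w) * word_image h w)"

lemma word_image_plus: "word_image h (v + w) = word_image h v * word_image h w"
  by (cases v; cases w) (simp add: word_image_def plus_fword_def)

lemma falg_lift_superset:
  assumes "finite S" "Poly_Mapping.keys a \<subseteq> S"
  shows "falg_lift h a = (\<Sum>w\<in>S. scal (Poly_Mapping.lookup a w) * word_image h w)"
  unfolding falg_lift_def by (rule sum.mono_neutral_left[OF assms]) (auto simp: in_keys_iff)

lemma falg_lift_add: "falg_lift h (a + b) = falg_lift h a + falg_lift h b"
  by (subst (1 2 3) falg_lift_superset[of "Poly_Mapping.keys a \<union> Poly_Mapping.keys b"])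
    (auto simp: keys_add lookup_add scal_add distrib_right sum.distrib)

lemma falg_lift_diff: "falg_lift h (a - b) = falg_lift h a - falg_lift h b"
  using falg_lift_add[of h "a - b" b] by simp

lemma falg_lift_single: "falg_lift h (Poly_Mapping.single w c) = scal c * word_image h w"
  by (cases "c = 0") (simp_all add: falg_lift_def)

lemma falg_lift_zero: "falg_lift h 0 = 0"
  by (simp add: falg_lift_def)

lemma falg_lift_sum: "falg_lift h (sum f A) = (\<Sum>i\<in>A. falg_lift h (f i))"
  by (induction A rule: infinite_finite_induct) (simp_all add: falg_lift_add falg_lift_zero)

lemma falg_lift_mult:
  fixes h :: "'g \<Rightarrow> ('h, 'k::comm_ring_1) falg"
  shows "falg_lift h (a * b) = falg_lift h a * falg_lift h b"
proof -
  have single: "falg_lift h (Poly_Mapping.single v c * Poly_Mapping.single w d)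
      = falg_lift h (Poly_Mapping.single v c) * falg_lift h (Poly_Mapping.single w d)" for v w c d
  proof -
    have "scal (c * d) * (x * y) = scal c * x * (scal d * y)" for x y :: "('h, 'k) falg"
      by (metis mult.assoc scal_commute scal_mult)
    then show ?thesis by (simp add: mult_single falg_lift_single word_image_plus)
  qed
  have "a * b = (\<Sum>v\<in>Poly_Mapping.keys a. \<Sum>w\<in>Poly_Mapping.keys b.
      Poly_Mapping.single v (Poly_Mapping.lookup a v) * Poly_Mapping.single w (Poly_Mapping.lookup b w))"
    by (subst (1) poly_mapping_sum_single[of a], subst (1) poly_mapping_sum_single[of b])
      (simp add: sum_product)
  then show ?thesis
    by (simp add: falg_lift_sum single falg_lift_single sum_product falg_lift_def[of h a] falg_lift_def[of h b])
qed

lemma falg_lift_gen: "falg_lift h (gen g) = h g"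
  by (simp add: gen_def falg_lift_single word_image_def)

lemma falg_lift_scal: "falg_lift h (scal c) = scal c"
  using falg_lift_single[of h 0 c] by (simp add: scal_def word_image_def zero_fword_def)

lemma falg_lift_one: "falg_lift h 1 = 1"
  using falg_lift_scal[of h 1] by simp

lemma poly_mapping_additive_eq_0:
  fixes A :: "('a \<Rightarrow>\<^sub>0 'b::comm_monoid_add) \<Rightarrow> 'c::ab_group_add"
  assumes add: "\<And>f g. A (f + g) = A f + A g"
    and single: "\<And>k c. A (Poly_Mapping.single k c) = 0"
  shows "A f = 0"
proof -
  have A_sum: "A (sum g S) = (\<Sum>s\<in>S. A (g s))" for g :: "'d \<Rightarrow> 'a \<Rightarrow>\<^sub>0 'b" and S
    using add[of 0 0] by (induction S rule: infinite_finite_induct) (simp_all add: add)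
  show ?thesis
    by (subst poly_mapping_sum_single) (simp add: A_sum single)
qed

abbreviation unit_idx :: "'n \<Rightarrow> 'n \<Rightarrow>\<^sub>0 nat" where
  "unit_idx p \<equiv> Poly_Mapping.single p 1"

definition vmon :: "'n \<Rightarrow> ('n \<Rightarrow>\<^sub>0 nat) \<Rightarrow> 'k \<Rightarrow> ('n, 'k::comm_ring_1) vfield" where
  "vmon p k c = (\<lambda>r. if r = p then Poly_Mapping.single k c else 0)"

lemma vfield_additive_eq_0:
  fixes V :: "('n::finite, 'k::comm_ring_1) vfield \<Rightarrow> 'c::ab_group_add"
  assumes add: "\<And>\<eta> \<xi>. V (\<lambda>r. \<eta> r + \<xi> r) = V \<eta> + V \<xi>"
    and vmon: "\<And>p k c. V (vmon p k c) = 0"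
  shows "V \<eta> = 0"
proof -
  have V_sum: "V (\<lambda>r. sum (\<lambda>s. g s r) S) = (\<Sum>s\<in>S. V (g s))" for g :: "'d \<Rightarrow> ('n, 'k) vfield" and S
    using add[of "\<lambda>_. 0" "\<lambda>_. 0"] by (induction S rule: infinite_finite_induct) (simp_all add: add)
  have component: "V (\<lambda>r. if r = p then f else 0) = 0" for p f
  proof (rule poly_mapping_additive_eq_0[where A = "\<lambda>f. V (\<lambda>r. if r = p then f else 0)"])
    show "V (\<lambda>r. if r = p then f + g else 0) = V (\<lambda>r. if r = p then f else 0) + V (\<lambda>r. if r = p then g else 0)" for f g
      using add[of "\<lambda>r. if r = p then f else 0" "\<lambda>r. if r = p then g else 0"]
      by (simp add: if_distrib[of "\<lambda>x. x + _"] cong: if_cong)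
    show "V (\<lambda>r. if r = p then Poly_Mapping.single k c else 0) = 0" for k c
      using vmon[of p k c] by (simp add: vmon_def)
  qed
  have "V \<eta> = V (\<lambda>r. \<Sum>p\<in>UNIV. if r = p then \<eta> p else 0)"
    by simp
  also have "\<dots> = 0"
    using V_sum[of "\<lambda>p r. if r = p then \<eta> p else 0" UNIV] by (simp add: component)
  finally show ?thesis .
qed

lemma pd_superset:
  assumes "finite S" "Poly_Mapping.keys f \<subseteq> S"
  shows "pd i f = (\<Sum>e\<in>S. Poly_Mapping.single (e - unit_idx i) (of_nat (Poly_Mapping.lookup e i) * Poly_Mapping.lookup f e))"
  unfolding pd_def by (rule sum.mono_neutral_left[OF assms]) (auto simp: in_keys_iff)

lemma pd_add: "pd i (f + g) = pd i f + pd i g"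
  by (subst (1 2 3) pd_superset[of "Poly_Mapping.keys f \<union> Poly_Mapping.keys g"])
    (auto simp: keys_add lookup_add distrib_left single_add sum.distrib)

lemma pd_zero [simp]: "pd i 0 = 0"
  by (simp add: pd_def)

lemma pd_single: "pd i (Poly_Mapping.single l c) = Poly_Mapping.single (l - unit_idx i) (of_nat (Poly_Mapping.lookup l i) * c)"
  by (cases "c = 0") (simp_all add: pd_def)

lemma lookup_smult_mp: "Poly_Mapping.lookup (smult_mp c f) k = c * Poly_Mapping.lookup f k"
  by (simp add: smult_mp_def flip: mult_map_scale_conv_mult) (simp add: map.rep_eq when_def)

lemma act_add_left: "act (\<lambda>r. \<eta> r + \<xi> r) f = act \<eta> f + act \<xi> f"
  by (simp add: act_def distrib_right sum.distrib)

lemma act_add_right: "act \<eta> (f + g) = act \<eta> f + act \<eta> g"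
  by (simp add: act_def pd_add distrib_left sum.distrib)

lemma act_vmon_single: "act (vmon p k c) (Poly_Mapping.single l d)
    = Poly_Mapping.single (k + (l - unit_idx p)) (c * (of_nat (Poly_Mapping.lookup l p) * d))"
  by (simp add: act_def vmon_def pd_single mult_single if_distrib[of "\<lambda>x. x * _"] cong: if_cong)

lemma lie_add_left: "lie (\<lambda>r. \<eta> r + \<xi> r) \<zeta> = (\<lambda>r. lie \<eta> \<zeta> r + lie \<xi> \<zeta> r)"
  and lie_add_right: "lie \<zeta> (\<lambda>r. \<eta> r + \<xi> r) = (\<lambda>r. lie \<zeta> \<eta> r + lie \<zeta> \<xi> r)"
  by (simp_all add: lie_def act_add_left act_add_right fun_eq_iff algebra_simps)

lemma lie_vmon: "lie (vmon p k c) (vmon q l d) = (\<lambda>r.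
     vmon q (k + (l - unit_idx p)) (c * (of_nat (Poly_Mapping.lookup l p) * d)) r
   + vmon p (l + (k - unit_idx q)) (- (d * (of_nat (Poly_Mapping.lookup k q) * c))) r)"
  by (rule ext) (simp add: lie_def act_def vmon_def pd_single mult_single single_uminus
      if_distrib[of "\<lambda>x. x * _"] cong: if_cong)

lemma vfm_vmon: "vfm k p = vmon p k 1"
  by (simp add: vfm_def vmon_def fun_eq_iff)

lemma vmon_vanishing: "m \<noteq> 0 \<Longrightarrow> \<forall>q. Poly_Mapping.lookup (vmon p m c q) 0 = 0"
  by (simp add: vmon_def lookup_single when_def)

section \<open>Multi-indices\<close>

definition mbox :: "('n \<Rightarrow>\<^sub>0 nat) \<Rightarrow> ('n \<Rightarrow>\<^sub>0 nat) set" where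
  "mbox k = {m. \<forall>i. Poly_Mapping.lookup m i \<le> Poly_Mapping.lookup k i}"

lemma lookup_image_mbox:
  "Poly_Mapping.lookup ` mbox (k :: 'n::finite \<Rightarrow>\<^sub>0 nat) = PiE UNIV (\<lambda>i. {..Poly_Mapping.lookup k i})"
proof
  show "PiE UNIV (\<lambda>i. {..Poly_Mapping.lookup k i}) \<subseteq> Poly_Mapping.lookup ` mbox k"
  proof
    fix g assume g: "g \<in> PiE UNIV (\<lambda>i. {..Poly_Mapping.lookup k i})"
    have "Poly_Mapping.lookup (Abs_poly_mapping g) = g" by simp
    moreover from g this have "Abs_poly_mapping g \<in> mbox k" by (auto simp: mbox_def)
    ultimately show "g \<in> Poly_Mapping.lookup ` mbox k" by (metis image_eqI)
  qed
qed (auto simp: mbox_def)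

lemma finite_mbox: "finite (mbox (k :: 'n::finite \<Rightarrow>\<^sub>0 nat))"
proof -
  have "finite (Poly_Mapping.lookup ` mbox k)"
    unfolding lookup_image_mbox by (rule finite_PiE) auto
  then show ?thesis by (rule finite_imageD) (simp add: inj_on_def poly_mapping.lookup_inject)
qed

lemma sum_mbox_prod:
  fixes f :: "'n::finite \<Rightarrow> nat \<Rightarrow> 'c::comm_semiring_1"
  shows "(\<Sum>m\<in>mbox k. \<Prod>i\<in>UNIV. f i (Poly_Mapping.lookup m i)) = (\<Prod>i\<in>UNIV. \<Sum>a\<le>Poly_Mapping.lookup k i. f i a)"
proof -
  have "(\<Sum>m\<in>mbox k. \<Prod>i\<in>UNIV. f i (Poly_Mapping.lookup m i))
      = (\<Sum>g\<in>Poly_Mapping.lookup ` mbox k. \<Prod>i\<in>UNIV. f i (g i))"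
    by (rule sum.reindex[symmetric, unfolded comp_def]) (simp add: inj_on_def poly_mapping.lookup_inject)
  also have "\<dots> = (\<Prod>i\<in>UNIV. \<Sum>a\<le>Poly_Mapping.lookup k i. f i a)"
    unfolding lookup_image_mbox by (rule prod_sum_PiE[symmetric]) auto
  finally show ?thesis .
qed

definition nonzero_below :: "('n \<Rightarrow>\<^sub>0 nat) \<Rightarrow> ('n \<Rightarrow>\<^sub>0 nat) set" where
  "nonzero_below k = mbox k - {0}"

lemma finite_nonzero_below: "finite (nonzero_below (k :: 'n::finite \<Rightarrow>\<^sub>0 nat))"
  by (simp add: nonzero_below_def finite_mbox)

lemma mchoose_eq_0: "m \<notin> mbox k \<Longrightarrow> mchoose k m = 0"
  unfolding mchoose_def mbox_def by (auto simp: not_le)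

lemma vandermonde_weighted:
  "(\<Sum>a\<le>Suc n. (x choose a) * (y choose (Suc n - a)) * (Suc n - a)) = y * ((x + (y - 1)) choose n)"
proof -
  have "(\<Sum>a\<le>Suc n. (x choose a) * (y choose (Suc n - a)) * (Suc n - a))
      = (\<Sum>a\<le>n. (x choose a) * (y choose (Suc n - a)) * (Suc n - a))"
    by simp
  also have "\<dots> = (\<Sum>a\<le>n. y * ((x choose a) * ((y - 1) choose (n - a))))"
  proof (rule sum.cong)
    fix a assume "a \<in> {..n}"
    then have "(Suc n - a) * (y choose (Suc n - a)) = y * ((y - 1) choose (n - a))"
      using times_binomial_minus1_eq[of "Suc n - a" y] by (simp add: Suc_diff_le)
    then show "(x choose a) * (y choose (Suc n - a)) * (Suc n - a) = y * ((x choose a) * ((y - 1) choose (n - a)))"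
      by (metis mult.commute mult.left_commute)
  qed simp
  also have "\<dots> = y * ((x + (y - 1)) choose n)"
    by (simp add: sum_distrib_left[symmetric] vandermonde)
  finally show ?thesis .
qed

lemma mchoose_vandermonde_weighted:
  fixes k l j :: "'n::finite \<Rightarrow>\<^sub>0 nat" and p :: 'n
  defines "J \<equiv> j + unit_idx p"
  shows "(\<Sum>m\<in>mbox J. mchoose k m * mchoose l (J - m) * Poly_Mapping.lookup (J - m) p)
    = Poly_Mapping.lookup l p * mchoose (k + (l - unit_idx p)) j"
proof -
  have lookup_J: "Poly_Mapping.lookup J i = Poly_Mapping.lookup j i + (if i = p then 1 else 0)" for i
    by (simp add: J_def lookup_add lookup_single when_def)
  have "(\<Sum>m\<in>mbox J. mchoose k m * mchoose l (J - m) * Poly_Mapping.lookup (J - m) p)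
      = (\<Sum>m\<in>mbox J. \<Prod>i\<in>UNIV. (Poly_Mapping.lookup k i choose Poly_Mapping.lookup m i)
          * (Poly_Mapping.lookup l i choose (Poly_Mapping.lookup J i - Poly_Mapping.lookup m i))
          * (if i = p then Poly_Mapping.lookup J i - Poly_Mapping.lookup m i else 1))"
    by (simp add: mchoose_def prod.distrib lookup_minus)
  also have "\<dots> = (\<Prod>i\<in>UNIV. \<Sum>a\<le>Poly_Mapping.lookup J i. (Poly_Mapping.lookup k i choose a)
          * (Poly_Mapping.lookup l i choose (Poly_Mapping.lookup J i - a))
          * (if i = p then Poly_Mapping.lookup J i - a else 1))"
    by (rule sum_mbox_prod)
  also have "\<dots> = (\<Prod>i\<in>UNIV. (if i = p then Poly_Mapping.lookup l p else 1)
          * (Poly_Mapping.lookup (k + (l - unit_idx p)) i choose Poly_Mapping.lookup j i))"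
  proof (rule prod.cong)
    fix i
    show "(\<Sum>a\<le>Poly_Mapping.lookup J i. (Poly_Mapping.lookup k i choose a)
          * (Poly_Mapping.lookup l i choose (Poly_Mapping.lookup J i - a))
          * (if i = p then Poly_Mapping.lookup J i - a else 1))
        = (if i = p then Poly_Mapping.lookup l p else 1)
          * (Poly_Mapping.lookup (k + (l - unit_idx p)) i choose Poly_Mapping.lookup j i)"
      using vandermonde_weighted[of "Poly_Mapping.lookup k p" "Poly_Mapping.lookup l p" "Poly_Mapping.lookup j p"]
        vandermonde[of "Poly_Mapping.lookup k i" "Poly_Mapping.lookup l i" "Poly_Mapping.lookup j i"]
      by (cases "i = p") (simp_all add: lookup_J lookup_add lookup_minus lookup_single when_def)
  qed simp
  also have "\<dots> = Poly_Mapping.lookup l p * mchoose (k + (l - unit_idx p)) j"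
    by (simp add: prod.distrib mchoose_def)
  finally show ?thesis .
qed

lemma Suc_times_choose_Suc: "Suc a * (n choose Suc a) = (n - a) * (n choose a)"
  using binomial_absorption[of a n] binomial_absorb_comp[of n a] by simp

lemma nonzero_pairs_eq_image:
  fixes k l j :: "'n::finite \<Rightarrow>\<^sub>0 nat" and p :: 'n
  defines "J \<equiv> j + unit_idx p"
  shows "{(m, m')\<in>nonzero_below k \<times> nonzero_below l. 0 < Poly_Mapping.lookup m' p \<and> m + (m' - unit_idx p) = j}
    = (\<lambda>m. (m, J - m)) ` {m\<in>mbox J - {0}. m \<in> mbox k \<and> J - m \<in> nonzero_below l \<and> 0 < Poly_Mapping.lookup (J - m) p}"
    (is "?F = _ ` ?A")
proof (intro equalityI subsetI)
  have lookup_J: "Poly_Mapping.lookup J i = Poly_Mapping.lookup j i + (if i = p then 1 else 0)" for i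
    by (simp add: J_def lookup_add lookup_single when_def)
  {
    fix s assume "s \<in> ?F"
    then obtain m m' where s: "s = (m, m')" "m \<in> nonzero_below k" "m' \<in> nonzero_below l"
      and pos: "0 < Poly_Mapping.lookup m' p" and sum_j: "m + (m' - unit_idx p) = j" by blast
    have lookup_j: "Poly_Mapping.lookup m i + (Poly_Mapping.lookup m' i - (if i = p then 1 else 0)) = Poly_Mapping.lookup j i" for i
      using arg_cong[OF sum_j, of "\<lambda>x. Poly_Mapping.lookup x i"]
      by (auto simp: lookup_add lookup_minus lookup_single when_def split: if_splits)
    have "Poly_Mapping.lookup m' i = Poly_Mapping.lookup (J - m) i" for i
      using lookup_j[of i] pos lookup_J[of i] by (cases "i = p") (auto simp: lookup_minus)
    moreover have "Poly_Mapping.lookup m i \<le> Poly_Mapping.lookup J i" for i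
      using lookup_j[of i] lookup_J[of i] by (cases "i = p") auto
    ultimately have "m' = J - m" "m \<in> mbox J" by (auto simp: poly_mapping_eqI mbox_def)
    with s pos show "s \<in> (\<lambda>m. (m, J - m)) ` ?A" by (auto simp: nonzero_below_def)
  next
    fix s assume "s \<in> (\<lambda>m. (m, J - m)) ` ?A"
    then obtain m where m: "m \<in> ?A" and s: "s = (m, J - m)" by auto
    then have box: "Poly_Mapping.lookup m i \<le> Poly_Mapping.lookup J i" and pos: "0 < Poly_Mapping.lookup (J - m) p" for i
      by (auto simp: mbox_def)
    have "m + ((J - m) - unit_idx p) = j"
    proof (rule poly_mapping_eqI)
      fix i
      show "Poly_Mapping.lookup (m + ((J - m) - unit_idx p)) i = Poly_Mapping.lookup j i"
        using box[of i] pos lookup_J[of i] lookup_J[of p]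
        by (cases "i = p") (auto simp: lookup_add lookup_minus lookup_single when_def)
    qed
    with m s show "s \<in> ?F" by (auto simp: nonzero_below_def)
  }
qed

(* The weighted Vandermonde sum with its term m = 0 split off. *)
lemma mchoose_convolution_nonzero:
  fixes k l j :: "'n::finite \<Rightarrow>\<^sub>0 nat" and p :: 'n
  shows "mchoose l j * (Poly_Mapping.lookup l p - Poly_Mapping.lookup j p)
    + (\<Sum>(m, m')\<in>{(m, m')\<in>nonzero_below k \<times> nonzero_below l.
          0 < Poly_Mapping.lookup m' p \<and> m + (m' - unit_idx p) = j}.
        mchoose k m * mchoose l m' * Poly_Mapping.lookup m' p)
    = Poly_Mapping.lookup l p * mchoose (k + (l - unit_idx p)) j"
proof -
  define J where "J = j + unit_idx p"
  define g where "g m = mchoose k m * mchoose l (J - m) * Poly_Mapping.lookup (J - m) p" for m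
  define A where "A = {m\<in>mbox J - {0}. m \<in> mbox k \<and> J - m \<in> nonzero_below l \<and> 0 < Poly_Mapping.lookup (J - m) p}"
  have "(\<Sum>(m, m')\<in>{(m, m')\<in>nonzero_below k \<times> nonzero_below l.
          0 < Poly_Mapping.lookup m' p \<and> m + (m' - unit_idx p) = j}.
        mchoose k m * mchoose l m' * Poly_Mapping.lookup m' p) = (\<Sum>m\<in>A. g m)"
    unfolding nonzero_pairs_eq_image J_def[symmetric] A_def[symmetric]
    by (subst sum.reindex) (auto intro: inj_onI simp: g_def)
  also have "\<dots> = (\<Sum>m\<in>mbox J - {0}. g m)"
  proof (rule sum.mono_neutral_left)
    show "\<forall>m\<in>mbox J - {0} - A. g m = 0"
      by (auto simp: A_def g_def nonzero_below_def) (metis mchoose_eq_0 less_numeral_extra(3))+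
  qed (auto simp: A_def finite_mbox)
  finally have nonzero_part: "(\<Sum>(m, m')\<in>{(m, m')\<in>nonzero_below k \<times> nonzero_below l.
          0 < Poly_Mapping.lookup m' p \<and> m + (m' - unit_idx p) = j}.
        mchoose k m * mchoose l m' * Poly_Mapping.lookup m' p) = (\<Sum>m\<in>mbox J - {0}. g m)" .
  have lookup_J: "Poly_Mapping.lookup J i = Poly_Mapping.lookup j i + (if i = p then 1 else 0)" for i
    by (simp add: J_def lookup_add lookup_single when_def)
  have "(\<Prod>i\<in>UNIV - {p}. Poly_Mapping.lookup l i choose Poly_Mapping.lookup J i)
      = (\<Prod>i\<in>UNIV - {p}. Poly_Mapping.lookup l i choose Poly_Mapping.lookup j i)"
    by (rule prod.cong) (auto simp: lookup_J)
  then have "g 0 = (Poly_Mapping.lookup l p choose Suc (Poly_Mapping.lookup j p)) * Suc (Poly_Mapping.lookup j p)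
      * (\<Prod>i\<in>UNIV - {p}. Poly_Mapping.lookup l i choose Poly_Mapping.lookup j i)"
    unfolding g_def mchoose_def prod.remove[OF finite_UNIV UNIV_I, of _ p]
    by (simp add: lookup_J algebra_simps)
  also have "\<dots> = mchoose l j * (Poly_Mapping.lookup l p - Poly_Mapping.lookup j p)"
    unfolding mchoose_def prod.remove[OF finite_UNIV UNIV_I, of _ p]
    using Suc_times_choose_Suc[of "Poly_Mapping.lookup j p" "Poly_Mapping.lookup l p"] by (simp add: ac_simps)
  finally have "mchoose l j * (Poly_Mapping.lookup l p - Poly_Mapping.lookup j p) + (\<Sum>m\<in>mbox J - {0}. g m)
      = (\<Sum>m\<in>mbox J. g m)"
    using sum.remove[OF finite_mbox, of 0 J g] by (simp add: mbox_def)
  also have "\<dots> = Poly_Mapping.lookup l p * mchoose (k + (l - unit_idx p)) j"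
    unfolding g_def J_def by (rule mchoose_vandermonde_weighted)
  finally show ?thesis using nonzero_part by simp
qed

lemmas lookup_unit_idx_simps = lookup_add lookup_minus lookup_single when_def

lemma poly_mapping_add_neq_0: "m \<noteq> 0 \<Longrightarrow> m + x \<noteq> (0 :: 'n \<Rightarrow>\<^sub>0 nat)"
  by (metis add_is_0 lookup_add lookup_zero poly_mapping_eqI)

lemma shift_diff_left:
  assumes "m' \<in> mbox l" "Poly_Mapping.lookup m' p < Poly_Mapping.lookup l p"
  shows "k + ((l - m') - unit_idx p) = (k + (l - unit_idx p)) - m'"
proof (rule poly_mapping_eqI)
  fix i show "Poly_Mapping.lookup (k + ((l - m') - unit_idx p)) i = Poly_Mapping.lookup ((k + (l - unit_idx p)) - m') i"
    using assms by (cases "i = p") (auto simp: mbox_def lookup_unit_idx_simps)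
qed

lemma shift_diff_both:
  assumes "m \<in> mbox k" "m' \<in> mbox l" "0 < Poly_Mapping.lookup m' p"
  shows "(k - m) + (l - m') = (k + (l - unit_idx p)) - (m + (m' - unit_idx p))"
proof (rule poly_mapping_eqI)
  fix i
  have "Poly_Mapping.lookup m i \<le> Poly_Mapping.lookup k i" "Poly_Mapping.lookup m' i \<le> Poly_Mapping.lookup l i"
    "Poly_Mapping.lookup m' p \<le> Poly_Mapping.lookup l p"
    using assms by (auto simp: mbox_def)
  with assms(3) show "Poly_Mapping.lookup ((k - m) + (l - m')) i
      = Poly_Mapping.lookup ((k + (l - unit_idx p)) - (m + (m' - unit_idx p))) i"
    by (cases "i = p") (auto simp: lookup_unit_idx_simps)
qed

lemma nonzero_below_shift:
  assumes "m' \<in> nonzero_below l" "Poly_Mapping.lookup m' p < Poly_Mapping.lookup l p"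
  shows "m' \<in> nonzero_below (k + (l - unit_idx p))"
  using assms unfolding nonzero_below_def mbox_def
  by (auto simp: lookup_unit_idx_simps) (metis trans_le_add2)

lemma nonzero_below_add_shift:
  assumes "m \<in> nonzero_below k" "m' \<in> nonzero_below l" "0 < Poly_Mapping.lookup m' p"
  shows "m + (m' - unit_idx p) \<in> nonzero_below (k + (l - unit_idx p))"
proof -
  have "m + (m' - unit_idx p) \<noteq> 0"
    using assms(1) by (simp add: nonzero_below_def poly_mapping_add_neq_0)
  moreover have "Poly_Mapping.lookup (m + (m' - unit_idx p)) i \<le> Poly_Mapping.lookup (k + (l - unit_idx p)) i" for i
  proof -
    have "Poly_Mapping.lookup m i \<le> Poly_Mapping.lookup k i" "Poly_Mapping.lookup m' i \<le> Poly_Mapping.lookup l i"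
      "Poly_Mapping.lookup m p \<le> Poly_Mapping.lookup k p" "Poly_Mapping.lookup m' p \<le> Poly_Mapping.lookup l p"
      using assms by (auto simp: nonzero_below_def mbox_def)
    with assms(3) show ?thesis by (cases "i = p") (auto simp: lookup_unit_idx_simps)
  qed
  ultimately show ?thesis by (simp add: nonzero_below_def mbox_def)
qed

lemma commute_prod_list:
  fixes a :: "'a::monoid_mult"
  assumes "\<And>y. y \<in> set ys \<Longrightarrow> a * y = y * a"
  shows "a * prod_list ys = prod_list ys * a"
  using assms by (induction ys) (simp_all, metis mult.assoc)

lemma prod_list_map_mult:
  fixes f g :: "'i \<Rightarrow> 'a::monoid_mult"
  assumes "\<And>i j. i \<in> set xs \<Longrightarrow> j \<in> set xs \<Longrightarrow> g i * f j = f j * g i"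
  shows "(\<Prod>i\<leftarrow>xs. f i * g i) = (\<Prod>i\<leftarrow>xs. f i) * (\<Prod>i\<leftarrow>xs. g i)"
  using assms
proof (induction xs)
  case (Cons x xs)
  have "g x * (\<Prod>i\<leftarrow>xs. f i) = (\<Prod>i\<leftarrow>xs. f i) * g x"
    by (rule commute_prod_list) (use Cons.prems in auto)
  then have "f x * g x * ((\<Prod>i\<leftarrow>xs. f i) * (\<Prod>i\<leftarrow>xs. g i))
      = f x * (\<Prod>i\<leftarrow>xs. f i) * (g x * (\<Prod>i\<leftarrow>xs. g i))"
    by (simp add: mult.assoc flip: mult.assoc[of "g x"])
  with Cons show ?case by simp
qed simp

definition commutator :: "'a::ring \<Rightarrow> 'a \<Rightarrow> 'a" where
  "commutator a b = a * b - b * a"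

lemma commutator_add_left: "commutator (a + b) c = commutator a c + commutator b c"
  and commutator_add_right: "commutator a (b + c) = commutator a b + commutator a c"
  and commutator_swap: "commutator a b = - commutator b a"
  by (simp_all add: commutator_def algebra_simps)

lemma commutator_sum_left: "commutator (sum f A) b = (\<Sum>i\<in>A. commutator (f i) b)"
  and commutator_sum_right: "commutator a (sum f A) = (\<Sum>i\<in>A. commutator a (f i))"
  by (simp_all add: commutator_def sum_distrib_left sum_distrib_right sum_subtractf)

lemma commutator_eq_0: "a * b = b * a \<Longrightarrow> commutator a b = 0"
  by (simp add: commutator_def)

section \<open>The target algebra as a quotient type\<close>

quotient_type ('n, 'k) weyl_lplus = "(('n::finite, 'k::comm_ring_1) tgen, 'k) falg" / "ideal_cong target_rel"
  by (rule equivp_ideal_cong)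

instantiation weyl_lplus :: (finite, comm_ring_1) "{ring, monoid_mult}"
begin

lift_definition zero_weyl_lplus :: "('a, 'b) weyl_lplus" is 0 .
lift_definition one_weyl_lplus :: "('a, 'b) weyl_lplus" is 1 .
lift_definition plus_weyl_lplus :: "('a, 'b) weyl_lplus \<Rightarrow> ('a, 'b) weyl_lplus \<Rightarrow> ('a, 'b) weyl_lplus"
  is "(+)" by (rule ideal_cong_add)
lift_definition uminus_weyl_lplus :: "('a, 'b) weyl_lplus \<Rightarrow> ('a, 'b) weyl_lplus"
  is uminus by (rule ideal_cong_uminus)
lift_definition minus_weyl_lplus :: "('a, 'b) weyl_lplus \<Rightarrow> ('a, 'b) weyl_lplus \<Rightarrow> ('a, 'b) weyl_lplus"
  is "(-)" by (metis diff_conv_add_uminus ideal_cong_add ideal_cong_uminus)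
lift_definition times_weyl_lplus :: "('a, 'b) weyl_lplus \<Rightarrow> ('a, 'b) weyl_lplus \<Rightarrow> ('a, 'b) weyl_lplus"
  is "(*)" by (rule ideal_cong_mult)

instance
  by standard (transfer; simp add: algebra_simps equivp_reflp[OF equivp_ideal_cong])+

end

lemma abs_weyl_lplus_add: "abs_weyl_lplus (a + b) = abs_weyl_lplus a + abs_weyl_lplus b"
  and abs_weyl_lplus_diff: "abs_weyl_lplus (a - b) = abs_weyl_lplus a - abs_weyl_lplus b"
  and abs_weyl_lplus_uminus: "abs_weyl_lplus (- a) = - abs_weyl_lplus a"
  and abs_weyl_lplus_mult: "abs_weyl_lplus (a * b) = abs_weyl_lplus a * abs_weyl_lplus b"
  and abs_weyl_lplus_zero [simp]: "abs_weyl_lplus 0 = 0"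
  and abs_weyl_lplus_one [simp]: "abs_weyl_lplus 1 = 1"
  by (simp_all add: plus_weyl_lplus.abs_eq minus_weyl_lplus.abs_eq uminus_weyl_lplus.abs_eq
      times_weyl_lplus.abs_eq zero_weyl_lplus.abs_eq one_weyl_lplus.abs_eq)

lemma abs_weyl_lplus_sum: "abs_weyl_lplus (sum f A) = (\<Sum>i\<in>A. abs_weyl_lplus (f i))"
  by (induction A rule: infinite_finite_induct) (simp_all add: abs_weyl_lplus_add abs_weyl_lplus_zero)

lemma abs_weyl_lplus_power: "abs_weyl_lplus (a ^ n) = abs_weyl_lplus a ^ n"
  by (induction n) (simp_all add: abs_weyl_lplus_mult abs_weyl_lplus_one)

lemma abs_weyl_lplus_prod_list: "abs_weyl_lplus (prod_list xs) = prod_list (map abs_weyl_lplus xs)"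
  by (induction xs) (simp_all add: abs_weyl_lplus_mult abs_weyl_lplus_one)

lemmas abs_weyl_lplus_hom = abs_weyl_lplus_add abs_weyl_lplus_diff abs_weyl_lplus_uminus
  abs_weyl_lplus_mult abs_weyl_lplus_sum abs_weyl_lplus_power abs_weyl_lplus_prod_list

lemma abs_weyl_lplus_eq_iff: "abs_weyl_lplus a = abs_weyl_lplus b \<longleftrightarrow> a - b \<in> genideal cls_ring target_rel"
  by (simp add: weyl_lplus.abs_eq_iff ideal_cong_def)

lemma abs_weyl_lplus_eqI: "a - b \<in> target_rel \<Longrightarrow> abs_weyl_lplus a = abs_weyl_lplus b"
  by (simp add: abs_weyl_lplus_eq_iff genideal_cls_ring_self)

lemma cls_target_rel_eqI: "abs_weyl_lplus a = abs_weyl_lplus b \<Longrightarrow> cls target_rel a = cls target_rel b"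
  by (simp add: cls_eq_iff abs_weyl_lplus_eq_iff)

abbreviation X :: "'n::finite \<Rightarrow> ('n, 'k::comm_ring_1) weyl_lplus" where
  "X i \<equiv> abs_weyl_lplus (gen (Tx i))"

abbreviation D :: "'n::finite \<Rightarrow> ('n, 'k::comm_ring_1) weyl_lplus" where
  "D i \<equiv> abs_weyl_lplus (gen (Td i))"

abbreviation L :: "('n::finite, 'k::comm_ring_1) lplus \<Rightarrow> ('n, 'k) weyl_lplus" where
  "L a \<equiv> abs_weyl_lplus (gen (TL a))"

abbreviation sc :: "'k::comm_ring_1 \<Rightarrow> ('n::finite, 'k) weyl_lplus" where
  "sc c \<equiv> abs_weyl_lplus (scal c)"

lemma X_commute: "X i * X j = X j * X i"
  unfolding abs_weyl_lplus_mult[symmetric]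
  by (rule abs_weyl_lplus_eqI) (auto simp: target_rel_def)

lemma D_commute: "D i * D j = D j * D i"
  unfolding abs_weyl_lplus_mult[symmetric]
  by (rule abs_weyl_lplus_eqI) (auto simp: target_rel_def)

lemma D_X: "D i * X j = X j * D i + (if i = j then 1 else 0)"
proof -
  have "abs_weyl_lplus (gen (Td i) * gen (Tx j))
      = abs_weyl_lplus (gen (Tx j) * gen (Td i) + (if i = j then 1 else 0))"
    by (rule abs_weyl_lplus_eqI) (unfold target_rel_def, blast intro: diff_diff_eq[symmetric])
  then show ?thesis by (cases "i = j") (simp_all add: abs_weyl_lplus_hom)
qed

lemma L_add: "L (Abs_lp (\<lambda>p. Rep_lp a p + Rep_lp b p)) = L a + L b"
  unfolding abs_weyl_lplus_add[symmetric]
  by (rule abs_weyl_lplus_eqI) (unfold target_rel_def, blast intro: diff_diff_eq[symmetric])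

lemma L_smult: "L (Abs_lp (smult_vf c (Rep_lp a))) = sc c * L a"
  unfolding abs_weyl_lplus_mult[symmetric]
  by (rule abs_weyl_lplus_eqI) (unfold target_rel_def, blast)

lemma L_commutator: "L a * L b = L b * L a + L (Abs_lp (lie (Rep_lp a) (Rep_lp b)))"
  unfolding abs_weyl_lplus_mult[symmetric] abs_weyl_lplus_add[symmetric]
  by (rule abs_weyl_lplus_eqI) (unfold target_rel_def, blast intro: diff_diff_eq[symmetric])

lemma X_L: "X i * L a = L a * X i"
  unfolding abs_weyl_lplus_mult[symmetric]
  by (rule abs_weyl_lplus_eqI) (unfold target_rel_def, blast)

lemma D_L: "D i * L a = L a * D i"
  unfolding abs_weyl_lplus_mult[symmetric]
  by (rule abs_weyl_lplus_eqI) (unfold target_rel_def, blast)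

lemma sc_commute: "sc c * y = y * sc c"
  by (induction y rule: weyl_lplus.abs_induct) (simp add: abs_weyl_lplus_mult[symmetric] scal_commute)

lemma sc_1: "sc 1 = 1"
  and sc_add: "sc (a + b) = sc a + sc b"
  and sc_uminus: "sc (- a) = - sc a"
  and sc_mult: "sc (a * b) = sc a * sc b"
  by (simp_all add: scal_add scal_uminus scal_mult abs_weyl_lplus_hom)

lemma sc_sum: "sc (sum f A) = (\<Sum>a\<in>A. sc (f a))"
  by (simp add: scal_sum abs_weyl_lplus_sum)

lemma sc_left_commute: "a * (sc c * b) = sc c * (a * b)"
  by (metis mult.assoc sc_commute)

lemma sc_sc: "sc a * (sc b * y) = sc (a * b) * y"
  by (simp add: sc_mult mult.assoc)

lemma sc_of_nat_mult3: "sc (of_nat (a * b * c)) * y = sc (of_nat a) * (sc (of_nat b) * (sc (of_nat c) * y))"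
  by (simp add: sc_mult mult.assoc)

lemma commutator_sc_left: "commutator (sc c * a) b = sc c * commutator a b"
  and commutator_sc_right: "commutator a (sc c * b) = sc c * commutator a b"
  by (simp_all add: commutator_def right_diff_distrib mult.assoc sc_left_commute)

lemma idx_list_enum: "distinct (idx_list :: 'n::finite list)" "set (idx_list :: 'n list) = UNIV"
proof -
  have "\<exists>xs :: 'n list. distinct xs \<and> set xs = UNIV"
    using finite_distinct_list[of "UNIV :: 'n set"] by auto
  from someI_ex[OF this] show "distinct (idx_list :: 'n list)" "set (idx_list :: 'n list) = UNIV"
    unfolding idx_list_def by auto
qed

abbreviation xmon :: "('n::finite \<Rightarrow>\<^sub>0 nat) \<Rightarrow> ('n, 'k::comm_ring_1) weyl_lplus" where
  "xmon k \<equiv> abs_weyl_lplus (wmono k)"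

lemma xmon_eq: "xmon k = (\<Prod>i\<leftarrow>idx_list. X i ^ Poly_Mapping.lookup k i)"
  by (simp add: wmono_def abs_weyl_lplus_hom comp_def)

lemma xmon_zero: "xmon 0 = 1"
  by (simp add: xmon_eq map_replicate_const)

lemma xmon_commute:
  assumes "\<And>j. y * X j = X j * y"
  shows "y * xmon k = xmon k * y"
  unfolding xmon_eq by (rule commute_prod_list) (clarsimp, metis assms power_commuting_commutes)

lemma xmon_add: "xmon (k + l) = xmon k * xmon l"
proof -
  have "X i ^ a * X j ^ b = X j ^ b * X i ^ a" for i j a b
    by (rule power_commuting_commutes[OF power_commuting_commutes[OF X_commute, symmetric]])
  then show ?thesis
    unfolding xmon_eq lookup_add power_add by (intro prod_list_map_mult)
qed

lemma L_xmon: "L a * xmon k = xmon k * L a"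
  by (rule xmon_commute) (rule X_L[symmetric])

lemma xmon_xmon: "xmon l * xmon k = xmon k * xmon l"
  by (metis xmon_add add.commute)

lemma D_X_power: "D p * X j ^ n
    = X j ^ n * D p + (if p = j then sc (of_nat n) * X j ^ (n - 1) else (0 :: ('n::finite, 'k::comm_ring_1) weyl_lplus))"
proof (induction n)
  case (Suc n)
  have X_sc: "X j * (sc (of_nat n) * X j ^ (n - 1)) = sc (of_nat n) * (X j ^ n :: ('n, 'k) weyl_lplus)"
    by (cases n) (simp_all add: abs_weyl_lplus_zero flip: mult.assoc sc_commute)
  have "D p * X j ^ Suc n = X j * (D p * X j ^ n) + (if p = j then X j ^ n else (0 :: ('n, 'k) weyl_lplus))"
    by (simp add: D_X distrib_right flip: mult.assoc)
  also have "\<dots> = X j * (X j ^ n * D p + (if p = j then sc (of_nat n) * X j ^ (n - 1) else 0))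
      + (if p = j then X j ^ n else 0)"
    by (simp only: Suc.IH)
  also have "\<dots> = X j ^ Suc n * D p + (if p = j then sc (of_nat (Suc n)) * X j ^ n else 0)"
    using X_sc by (simp add: distrib_left distrib_right mult.assoc sc_add sc_1)
  finally show ?case by simp
qed (simp add: abs_weyl_lplus_hom)

lemma D_prod_X_power:
  fixes l :: "'n::finite \<Rightarrow>\<^sub>0 nat"
  assumes "distinct xs"
  shows "D p * (\<Prod>i\<leftarrow>xs. X i ^ Poly_Mapping.lookup l i) = (\<Prod>i\<leftarrow>xs. X i ^ Poly_Mapping.lookup l i) * D p
    + (if p \<in> set xs then sc (of_nat (Poly_Mapping.lookup l p)) * (\<Prod>i\<leftarrow>xs. X i ^ Poly_Mapping.lookup (l - unit_idx p) i)
       else (0 :: ('n, 'k::comm_ring_1) weyl_lplus))"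
  using assms
proof (induction xs)
  case (Cons j xs)
  let ?P = "\<lambda>l. \<Prod>i\<leftarrow>xs. X i ^ Poly_Mapping.lookup l i :: ('n, 'k) weyl_lplus"
  let ?l' = "l - unit_idx p"
  have "D p * (X j ^ Poly_Mapping.lookup l j * ?P l)
      = X j ^ Poly_Mapping.lookup l j * (D p * ?P l)
        + (if p = j then sc (of_nat (Poly_Mapping.lookup l j)) * X j ^ (Poly_Mapping.lookup l j - 1) else 0) * ?P l"
    by (simp add: D_X_power distrib_right flip: mult.assoc)
  also have "\<dots> = X j ^ Poly_Mapping.lookup l j * (?P l * D p
        + (if p \<in> set xs then sc (of_nat (Poly_Mapping.lookup l p)) * ?P ?l' else 0))
      + (if p = j then sc (of_nat (Poly_Mapping.lookup l j)) * X j ^ (Poly_Mapping.lookup l j - 1) else 0) * ?P l"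
    using Cons by simp
  also have "\<dots> = X j ^ Poly_Mapping.lookup l j * ?P l * D p
      + (if p \<in> set (j # xs) then sc (of_nat (Poly_Mapping.lookup l p)) * (X j ^ Poly_Mapping.lookup ?l' j * ?P ?l') else 0)"
  proof (cases "p = j")
    case True
    with Cons.prems have "?P ?l' = ?P l"
      by (intro arg_cong[where f = prod_list] map_cong) (auto simp: lookup_minus lookup_single when_def)
    with True Cons.prems show ?thesis
      by (simp add: distrib_left distrib_right mult.assoc lookup_minus)
  next
    case False
    then have "Poly_Mapping.lookup ?l' j = Poly_Mapping.lookup l j"
      by (simp add: lookup_minus lookup_single)
    moreover have "X j ^ a * (sc c * Q) = sc c * (X j ^ a * Q)" for a c and Q :: "('n, 'k) weyl_lplus"
      by (metis mult.assoc sc_commute)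
    ultimately show ?thesis using False
      by (simp add: distrib_left mult.assoc)
  qed
  finally show ?case by simp
qed simp

lemma D_xmon: "D p * xmon l = xmon l * D p + sc (of_nat (Poly_Mapping.lookup l p)) * xmon (l - unit_idx p)"
  using D_prod_X_power[OF idx_list_enum(1), of p l] by (simp add: xmon_eq idx_list_enum(2))

lemma xmon_D_xmon: "xmon k * D p * xmon l
    = xmon (k + l) * D p + sc (of_nat (Poly_Mapping.lookup l p)) * xmon (k + (l - unit_idx p))"
  by (simp add: D_xmon distrib_left xmon_add mult.assoc sc_left_commute)

lemma xmon_D_xmon_right: "xmon k * D p * (xmon l * y)
    = xmon (k + l) * D p * y + sc (of_nat (Poly_Mapping.lookup l p)) * (xmon (k + (l - unit_idx p)) * y)"
  by (simp only: mult.assoc[symmetric] xmon_D_xmon) (simp add: distrib_right mult.assoc)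

lemma xmon_L_xmon_right: "xmon l * L u * (xmon k * y) = xmon (k + l) * (L u * y)"
proof -
  have "xmon l * L u * (xmon k * y) = xmon l * (L u * xmon k) * y"
    by (simp only: mult.assoc)
  also have "\<dots> = xmon l * xmon k * (L u * y)"
    by (simp only: L_xmon mult.assoc)
  also have "\<dots> = xmon (k + l) * (L u * y)"
    by (simp only: xmon_add add.commute[of k l])
  finally show ?thesis .
qed

section \<open>Commutators of the images of vector fields\<close>

abbreviation Lm :: "('n::finite \<Rightarrow>\<^sub>0 nat) \<Rightarrow> 'n \<Rightarrow> ('n, 'k::comm_ring_1) weyl_lplus" where
  "Lm m p \<equiv> L (Abs_lp (vfm m p))"

lemma Rep_Abs_lp_vfm: "m \<noteq> 0 \<Longrightarrow> Rep_lp (Abs_lp (vfm m p)) = vfm m p"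
  by (rule Abs_lp_inverse) (use vmon_vanishing[of m p 1] in \<open>simp add: vfm_vmon\<close>)

lemma L_vmon: "m \<noteq> 0 \<Longrightarrow> L (Abs_lp (vmon p m c)) = sc c * (Lm m p :: ('n::finite, 'k::comm_ring_1) weyl_lplus)"
proof -
  assume "m \<noteq> 0"
  then have "Rep_lp (Abs_lp (vfm m p) :: ('n, 'k) lplus) = vfm m p"
    using Abs_lp_inverse[of "vfm m p"] vmon_vanishing[of m p 1] by (simp add: vfm_vmon)
  moreover have "smult_vf c (vfm m p) = vmon p m c"
    by (simp add: smult_vf_def vfm_def vmon_def smult_mp_def mult_single fun_eq_iff)
  ultimately show ?thesis
    using L_smult[of c "Abs_lp (vfm m p) :: ('n, 'k) lplus"] by simp
qed

lemma L_lie_vfm: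
  assumes "m \<noteq> 0" "m' \<noteq> 0"
  shows "L (Abs_lp (lie (vfm m p) (vfm m' q)))
    = sc (of_nat (Poly_Mapping.lookup m' p)) * Lm (m + (m' - unit_idx p)) q
    - sc (of_nat (Poly_Mapping.lookup m q)) * (Lm (m' + (m - unit_idx q)) p :: ('n::finite, 'k::comm_ring_1) weyl_lplus)"
proof -
  let ?A = "m + (m' - unit_idx p)" and ?B = "m' + (m - unit_idx q)"
  let ?a = "vmon q ?A (of_nat (Poly_Mapping.lookup m' p)) :: ('n, 'k) vfield"
  let ?b = "vmon p ?B (- of_nat (Poly_Mapping.lookup m q)) :: ('n, 'k) vfield"
  have nz: "?A \<noteq> 0" "?B \<noteq> 0"
    using assms by (simp_all add: poly_mapping_add_neq_0)
  have "lie (vfm m p) (vfm m' q) = (\<lambda>r. ?a r + ?b r)"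
    unfolding vfm_vmon lie_vmon by simp
  moreover have "Rep_lp (Abs_lp ?a) = ?a"
    by (rule Abs_lp_inverse) (use vmon_vanishing[OF nz(1)] in simp)
  moreover have "Rep_lp (Abs_lp ?b) = ?b"
    by (rule Abs_lp_inverse) (use vmon_vanishing[OF nz(2)] in simp)
  ultimately have "L (Abs_lp (lie (vfm m p) (vfm m' q))) = L (Abs_lp ?a) + L (Abs_lp ?b)"
    using L_add[of "Abs_lp ?a" "Abs_lp ?b"] by simp
  also have "\<dots> = sc (of_nat (Poly_Mapping.lookup m' p)) * Lm ?A q + sc (- of_nat (Poly_Mapping.lookup m q)) * Lm ?B p"
    by (simp only: L_vmon[OF nz(1)] L_vmon[OF nz(2)])
  finally show ?thesis
    by (simp add: sc_uminus)
qed

definition Lpart :: "('n::finite \<Rightarrow>\<^sub>0 nat) \<Rightarrow> 'n \<Rightarrow> ('n, 'k::comm_ring_1) weyl_lplus" where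
  "Lpart k p = (\<Sum>m\<in>nonzero_below k. sc (of_nat (mchoose k m)) * (xmon (k - m) * Lm m p))"

abbreviation Phi :: "('n::finite \<Rightarrow>\<^sub>0 nat) \<Rightarrow> 'n \<Rightarrow> ('n, 'k::comm_ring_1) weyl_lplus" where
  "Phi k p \<equiv> abs_weyl_lplus (phiV k p)"

lemma Phi_eq: "Phi k p = xmon k * D p + Lpart k p"
proof -
  have "{m. m \<noteq> 0 \<and> (\<forall>i. Poly_Mapping.lookup m i \<le> Poly_Mapping.lookup k i)} = nonzero_below k"
    by (auto simp: nonzero_below_def mbox_def)
  then show ?thesis
    by (simp add: phiV_def Lpart_def abs_weyl_lplus_hom mult.assoc)
qed

lemma Lpart_xmon: "Lpart k p * xmon l = xmon l * (Lpart k p :: ('n::finite, 'k::comm_ring_1) weyl_lplus)"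
proof -
  have "xmon l * (sc c * (xmon a * Lm m p)) = sc c * (xmon a * Lm m p) * (xmon l :: ('n, 'k) weyl_lplus)" for c a m
    by (simp add: sc_left_commute mult.assoc L_xmon xmon_xmon flip: mult.assoc[of "xmon l"])
  then show ?thesis
    by (simp add: Lpart_def sum_distrib_left sum_distrib_right)
qed

lemma commutator_xmon_D_xmon:
  "commutator (xmon k * D p) (xmon l) = sc (of_nat (Poly_Mapping.lookup l p)) * xmon (k + (l - unit_idx p))"
  unfolding commutator_def xmon_D_xmon by (simp add: add.commute flip: xmon_add mult.assoc)

lemma commutator_Phi_xmon:
  "commutator (Phi k p) (xmon l) = sc (of_nat (Poly_Mapping.lookup l p)) * xmon (k + (l - unit_idx p))"
  by (simp add: Phi_eq commutator_add_left commutator_xmon_D_xmon commutator_eq_0 Lpart_xmon)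

lemma commutator_xmon_D:
  "commutator (xmon k * D p) (xmon l * D q :: ('n::finite, 'k::comm_ring_1) weyl_lplus)
    = sc (of_nat (Poly_Mapping.lookup l p)) * (xmon (k + (l - unit_idx p)) * D q)
    - sc (of_nat (Poly_Mapping.lookup k q)) * (xmon (l + (k - unit_idx q)) * D p)"
proof -
  have "xmon (k + l) * D p * D q = xmon (l + k) * D q * (D p :: ('n, 'k) weyl_lplus)"
    by (simp add: add.commute mult.assoc D_commute[of p q])
  then show ?thesis
    by (simp add: commutator_def xmon_D_xmon_right)
qed

lemma commutator_xmon_D_xmon_L:
  "commutator (xmon k * D p) (xmon l * L u :: ('n::finite, 'k::comm_ring_1) weyl_lplus)
    = sc (of_nat (Poly_Mapping.lookup l p)) * (xmon (k + (l - unit_idx p)) * L u)"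
  unfolding commutator_def xmon_D_xmon_right xmon_L_xmon_right by (simp add: D_L mult.assoc)

lemma commutator_xmon_L:
  "commutator (xmon k * L u) (xmon l * L v :: ('n::finite, 'k::comm_ring_1) weyl_lplus)
    = xmon (k + l) * L (Abs_lp (lie (Rep_lp u) (Rep_lp v)))"
proof -
  have "commutator (xmon k * L u) (xmon l * L v) = xmon (l + k) * (L u * L v) - xmon (k + l) * (L v * L u)"
    by (simp add: commutator_def xmon_L_xmon_right)
  then show ?thesis
    by (simp add: add.commute L_commutator[of u v] distrib_left)
qed

lemma commutator_xmon_Lm:
  assumes "m \<noteq> 0" "m' \<noteq> 0"
  shows "commutator (xmon a * Lm m p) (xmon b * Lm m' q)
    = sc (of_nat (Poly_Mapping.lookup m' p)) * (xmon (a + b) * Lm (m + (m' - unit_idx p)) q)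
    - sc (of_nat (Poly_Mapping.lookup m q)) * (xmon (b + a) * (Lm (m' + (m - unit_idx q)) p :: ('n::finite, 'k::comm_ring_1) weyl_lplus))"
  using assms by (simp add: commutator_xmon_L Rep_Abs_lp_vfm L_lie_vfm right_diff_distrib sc_left_commute add.commute)

(* The U(L+)-valued parts of [phi(x^k d_p), phi(x^l d_q)]: DL_terms comes from d_p acting on the
   factors x^(l-m'), LL_terms from the brackets in L+. *)
definition DL_terms :: "('n::finite \<Rightarrow>\<^sub>0 nat) \<Rightarrow> ('n \<Rightarrow>\<^sub>0 nat) \<Rightarrow> 'n \<Rightarrow> 'n \<Rightarrow> ('n, 'k::comm_ring_1) weyl_lplus" where
  "DL_terms k l p q = (\<Sum>m'\<in>nonzero_below l. sc (of_nat (mchoose l m' * Poly_Mapping.lookup (l - m') p))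
      * (xmon (k + ((l - m') - unit_idx p)) * Lm m' q))"

definition LL_terms :: "('n::finite \<Rightarrow>\<^sub>0 nat) \<Rightarrow> ('n \<Rightarrow>\<^sub>0 nat) \<Rightarrow> 'n \<Rightarrow> 'n \<Rightarrow> ('n, 'k::comm_ring_1) weyl_lplus" where
  "LL_terms k l p q = (\<Sum>m\<in>nonzero_below k. \<Sum>m'\<in>nonzero_below l.
      sc (of_nat (mchoose k m * mchoose l m' * Poly_Mapping.lookup m' p))
      * (xmon ((k - m) + (l - m')) * Lm (m + (m' - unit_idx p)) q))"

lemma commutator_xmon_D_Lpart: "commutator (xmon k * D p) (Lpart l q) = DL_terms k l p q"
  by (simp add: Lpart_def DL_terms_def commutator_sum_right commutator_sc_right commutator_xmon_D_xmon_L
      sc_mult mult.assoc)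

lemma commutator_Lpart:
  "commutator (Lpart k p) (Lpart l q) = LL_terms k l p q - (LL_terms l k q p :: ('n::finite, 'k::comm_ring_1) weyl_lplus)"
proof -
  have "commutator (Lpart k p) (Lpart l q) = (\<Sum>m\<in>nonzero_below k. \<Sum>m'\<in>nonzero_below l.
      sc (of_nat (mchoose l m')) * (sc (of_nat (mchoose k m))
        * commutator (xmon (k - m) * Lm m p) (xmon (l - m') * (Lm m' q :: ('n, 'k) weyl_lplus))))"
    unfolding Lpart_def
    by (subst commutator_sum_left)
      (simp only: commutator_sc_left commutator_sum_right commutator_sc_right sum_distrib_left)
  also have "\<dots> = LL_terms k l p q - (\<Sum>m\<in>nonzero_below k. \<Sum>m'\<in>nonzero_below l.
      sc (of_nat (mchoose l m' * mchoose k m * Poly_Mapping.lookup m q))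
      * (xmon ((l - m') + (k - m)) * Lm (m' + (m - unit_idx q)) p))"
    unfolding LL_terms_def sum_subtractf[symmetric]
  proof (intro sum.cong refl)
    fix m m' assume "m \<in> nonzero_below k" "m' \<in> nonzero_below l"
    then have "m \<noteq> 0" "m' \<noteq> 0" by (auto simp: nonzero_below_def)
    then show "sc (of_nat (mchoose l m')) * (sc (of_nat (mchoose k m))
        * commutator (xmon (k - m) * Lm m p) (xmon (l - m') * Lm m' q))
      = sc (of_nat (mchoose k m * mchoose l m' * Poly_Mapping.lookup m' p))
        * (xmon ((k - m) + (l - m')) * Lm (m + (m' - unit_idx p)) q)
      - sc (of_nat (mchoose l m' * mchoose k m * Poly_Mapping.lookup m q))
        * (xmon ((l - m') + (k - m)) * (Lm (m' + (m - unit_idx q)) p :: ('n, 'k) weyl_lplus))"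
      by (simp add: commutator_xmon_Lm right_diff_distrib sc_of_nat_mult3
          mult.commute[of "mchoose k m" "mchoose l m'"] del: of_nat_mult)
  qed
  also have "\<dots> = LL_terms k l p q - LL_terms l k q p"
    unfolding LL_terms_def by (subst sum.swap) (rule refl)
  finally show ?thesis .
qed

lemma DL_terms_eq:
  fixes k l :: "'n::finite \<Rightarrow>\<^sub>0 nat" and p q :: 'n
  defines "P \<equiv> k + (l - unit_idx p)"
  shows "DL_terms k l p q
    = (\<Sum>j\<in>nonzero_below P. sc (of_nat (mchoose l j * (Poly_Mapping.lookup l p - Poly_Mapping.lookup j p)))
        * (xmon (P - j) * (Lm j q :: ('n, 'k::comm_ring_1) weyl_lplus)))"
    (is "_ = (\<Sum>j\<in>_. ?h j)")
proof -
  have "DL_terms k l p q = (\<Sum>j\<in>nonzero_below l. ?h j)"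
    unfolding DL_terms_def
  proof (rule sum.cong[OF refl])
    fix m' assume m': "m' \<in> nonzero_below l"
    show "sc (of_nat (mchoose l m' * Poly_Mapping.lookup (l - m') p)) * (xmon (k + ((l - m') - unit_idx p)) * Lm m' q)
        = ?h m'"
    proof (cases "Poly_Mapping.lookup m' p < Poly_Mapping.lookup l p")
      case True
      with m' have "k + ((l - m') - unit_idx p) = P - m'"
        unfolding P_def by (intro shift_diff_left) (auto simp: nonzero_below_def)
      then show ?thesis by (simp add: lookup_minus)
    qed (simp add: lookup_minus)
  qed
  also have "\<dots> = (\<Sum>j\<in>nonzero_below l \<union> nonzero_below P. ?h j)"
    by (rule sum.mono_neutral_left) (auto simp: finite_nonzero_below nonzero_below_def finite_mbox mchoose_eq_0)
  also have "\<dots> = (\<Sum>j\<in>nonzero_below P. ?h j)"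
  proof (rule sum.mono_neutral_right)
    show "\<forall>j\<in>nonzero_below l \<union> nonzero_below P - nonzero_below P. ?h j = 0"
      using nonzero_below_shift[of _ l p k] by (fastforce simp: P_def)
  qed (auto simp: finite_nonzero_below)
  finally show ?thesis .
qed

lemma sum_sc_group:
  assumes "finite S" "finite T" "g ` S \<subseteq> T"
  shows "(\<Sum>s\<in>S. sc (of_nat (c s)) * F (g s)) = (\<Sum>j\<in>T. sc (of_nat (\<Sum>s\<in>{s\<in>S. g s = j}. c s)) * F j)"
proof -
  have "(\<Sum>s\<in>{s\<in>S. g s = j}. sc (of_nat (c s)) * F (g s)) = sc (of_nat (\<Sum>s\<in>{s\<in>S. g s = j}. c s)) * F j" for j
    by (simp add: sc_sum sum_distrib_right)
  then show ?thesis
    using sum.group[OF assms, of "\<lambda>s. sc (of_nat (c s)) * F (g s)"] by simp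
qed

lemma LL_terms_eq:
  fixes k l :: "'n::finite \<Rightarrow>\<^sub>0 nat" and p q :: 'n
  defines "P \<equiv> k + (l - unit_idx p)"
  shows "LL_terms k l p q
    = (\<Sum>j\<in>nonzero_below P. sc (of_nat (\<Sum>(m, m')\<in>{(m, m')\<in>nonzero_below k \<times> nonzero_below l.
              0 < Poly_Mapping.lookup m' p \<and> m + (m' - unit_idx p) = j}.
            mchoose k m * mchoose l m' * Poly_Mapping.lookup m' p))
          * (xmon (P - j) * (Lm j q :: ('n, 'k::comm_ring_1) weyl_lplus)))"
proof -
  define S where "S = {(m, m')\<in>nonzero_below k \<times> nonzero_below l. 0 < Poly_Mapping.lookup m' p}"
  define g where "g = (\<lambda>(m, m'). m + (m' - unit_idx p))"
  define c where "c = (\<lambda>(m, m'). mchoose k m * mchoose l m' * Poly_Mapping.lookup m' p)"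
  define F where "F j = xmon (P - j) * (Lm j q :: ('n, 'k) weyl_lplus)" for j
  have "LL_terms k l p q = (\<Sum>(m, m')\<in>nonzero_below k \<times> nonzero_below l. sc (of_nat (c (m, m')))
      * (xmon ((k - m) + (l - m')) * (Lm (m + (m' - unit_idx p)) q :: ('n, 'k) weyl_lplus)))"
    by (simp add: LL_terms_def sum.cartesian_product c_def)
  also have "\<dots> = (\<Sum>(m, m')\<in>S. sc (of_nat (c (m, m'))) * (xmon ((k - m) + (l - m')) * Lm (m + (m' - unit_idx p)) q))"
  proof (rule sum.mono_neutral_right)
    show "\<forall>s\<in>nonzero_below k \<times> nonzero_below l - S. (case s of (m, m') \<Rightarrow> sc (of_nat (c (m, m')))
        * (xmon ((k - m) + (l - m')) * (Lm (m + (m' - unit_idx p)) q :: ('n, 'k) weyl_lplus))) = 0"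
    proof
      fix s assume "s \<in> nonzero_below k \<times> nonzero_below l - S"
      then obtain m m' where "s = (m, m')" "Poly_Mapping.lookup m' p = 0"
        by (auto simp: S_def)
      then show "(case s of (m, m') \<Rightarrow> sc (of_nat (c (m, m')))
          * (xmon ((k - m) + (l - m')) * (Lm (m + (m' - unit_idx p)) q :: ('n, 'k) weyl_lplus))) = 0"
        by (simp add: c_def)
    qed
  qed (auto simp: S_def finite_nonzero_below)
  also have "\<dots> = (\<Sum>s\<in>S. sc (of_nat (c s)) * F (g s))"
    by (rule sum.cong) (auto simp: S_def g_def F_def P_def nonzero_below_def shift_diff_both)
  also have "\<dots> = (\<Sum>j\<in>nonzero_below P. sc (of_nat (\<Sum>s\<in>{s\<in>S. g s = j}. c s)) * F j)"
  proof (rule sum_sc_group)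
    show "finite S"
      unfolding S_def by (rule finite_subset[of _ "nonzero_below k \<times> nonzero_below l"]) (auto simp: finite_nonzero_below)
    show "g ` S \<subseteq> nonzero_below P"
    proof
      fix j assume "j \<in> g ` S"
      then obtain m m' where "m \<in> nonzero_below k" "m' \<in> nonzero_below l" "0 < Poly_Mapping.lookup m' p"
        and "j = m + (m' - unit_idx p)"
        by (auto simp: S_def g_def)
      then show "j \<in> nonzero_below P"
        unfolding P_def by (blast intro: nonzero_below_add_shift)
    qed
  qed (rule finite_nonzero_below)
  finally show ?thesis
    by (simp add: F_def S_def g_def c_def case_prod_beta' conj_assoc)
qed

lemma DL_terms_plus_LL_terms:
  "DL_terms k l p q + LL_terms k l p q
    = sc (of_nat (Poly_Mapping.lookup l p)) * (Lpart (k + (l - unit_idx p)) q :: ('n::finite, 'k::comm_ring_1) weyl_lplus)"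
proof -
  have collect: "sc (of_nat a) * y + sc (of_nat b) * y = sc (of_nat (Poly_Mapping.lookup l p)) * (sc (of_nat c) * y)"
    if "a + b = Poly_Mapping.lookup l p * c" for a b c and y :: "('n, 'k) weyl_lplus"
    using that by (simp flip: distrib_right sc_add of_nat_add mult.assoc sc_mult of_nat_mult)
  show ?thesis
    unfolding DL_terms_eq LL_terms_eq Lpart_def sum_distrib_left sum.distrib[symmetric]
    by (intro sum.cong refl collect mchoose_convolution_nonzero)
qed

lemma commutator_Phi:
  "commutator (Phi k p) (Phi l q)
    = sc (of_nat (Poly_Mapping.lookup l p)) * Phi (k + (l - unit_idx p)) q
    - sc (of_nat (Poly_Mapping.lookup k q)) * (Phi (l + (k - unit_idx q)) p :: ('n::finite, 'k::comm_ring_1) weyl_lplus)"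
proof -
  have "commutator (Phi k p) (Phi l q) = commutator (xmon k * D p) (xmon l * D q)
      + DL_terms k l p q - DL_terms l k q p + (LL_terms k l p q - LL_terms l k q p)"
    by (simp add: Phi_eq commutator_add_left commutator_add_right commutator_xmon_D_Lpart commutator_Lpart
        commutator_swap[of "Lpart k p" "xmon l * D q"])
  also have "\<dots> = sc (of_nat (Poly_Mapping.lookup l p)) * (xmon (k + (l - unit_idx p)) * D q)
      + (DL_terms k l p q + LL_terms k l p q)
      - (sc (of_nat (Poly_Mapping.lookup k q)) * (xmon (l + (k - unit_idx q)) * D p) + (DL_terms l k q p + LL_terms l k q p))"
    by (simp add: commutator_xmon_D algebra_simps)
  also have "\<dots> = sc (of_nat (Poly_Mapping.lookup l p)) * Phi (k + (l - unit_idx p)) q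
      - sc (of_nat (Poly_Mapping.lookup k q)) * Phi (l + (k - unit_idx q)) p"
    by (simp only: DL_terms_plus_LL_terms Phi_eq distrib_left)
  finally show ?thesis .
qed

definition qlin :: "(('n::finite \<Rightarrow>\<^sub>0 nat) \<Rightarrow> ('n, 'k::comm_ring_1) weyl_lplus) \<Rightarrow> ('n, 'k) mpoly \<Rightarrow> ('n, 'k) weyl_lplus" where
  "qlin T f = (\<Sum>k\<in>Poly_Mapping.keys f. sc (Poly_Mapping.lookup f k) * T k)"

lemma qlin_superset:
  assumes "finite S" "Poly_Mapping.keys f \<subseteq> S"
  shows "qlin T f = (\<Sum>k\<in>S. sc (Poly_Mapping.lookup f k) * T k)"
  unfolding qlin_def by (rule sum.mono_neutral_left[OF assms]) (auto simp: in_keys_iff scal_def)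

lemma qlin_add: "qlin T (f + g) = qlin T f + qlin T g"
  by (subst (1 2 3) qlin_superset[of "Poly_Mapping.keys f \<union> Poly_Mapping.keys g"])
    (auto simp: keys_add lookup_add sc_add distrib_right sum.distrib)

lemma qlin_single: "qlin T (Poly_Mapping.single k c) = sc c * T k"
  by (cases "c = 0") (simp_all add: qlin_def scal_def)

lemma qlin_smult: "qlin T (smult_mp c f) = sc c * qlin T f"
proof -
  have "Poly_Mapping.keys (smult_mp c f) \<subseteq> Poly_Mapping.keys f"
    by (auto simp: in_keys_iff lookup_smult_mp)
  then show ?thesis
    by (simp add: qlin_superset[of "Poly_Mapping.keys f"] qlin_def[of T f] lookup_smult_mp sc_mult
        sum_distrib_left mult.assoc)
qed

lemma abs_embA: "abs_weyl_lplus (embA f) = qlin xmon f"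
  by (simp add: embA_def qlin_def abs_weyl_lplus_hom)

lemma qlin_xmon_mult: "qlin xmon (f * g) = qlin xmon f * (qlin xmon g :: ('n::finite, 'k::comm_ring_1) weyl_lplus)"
proof -
  define B :: "('n, 'k) mpoly \<Rightarrow> ('n, 'k) mpoly \<Rightarrow> ('n, 'k) weyl_lplus" where
    "B f g = qlin xmon (f * g) - qlin xmon f * qlin xmon g" for f g
  have monomial: "B (Poly_Mapping.single k c) (Poly_Mapping.single l d) = 0" for k c l d
    by (simp add: B_def mult_single qlin_single xmon_add sc_mult mult.assoc sc_left_commute[of "xmon k"])
  have add_left: "B (f + f') g = B f g + B f' g" for f f' g
    by (simp add: B_def distrib_right qlin_add)
  have add_right: "B f (g + g') = B f g + B f g'" for f g g'
    by (simp add: B_def distrib_left qlin_add)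
  have single_left: "B (Poly_Mapping.single k c) g = 0" for k c g
    by (rule poly_mapping_additive_eq_0[where A = "B (Poly_Mapping.single k c)"]) (simp_all only: add_right monomial)
  have "B f g = 0"
    by (rule poly_mapping_additive_eq_0[where A = "\<lambda>f. B f g"]) (simp_all only: add_left single_left)
  then show ?thesis by (simp add: B_def)
qed

lemma qlin_xmon_one: "qlin xmon 1 = 1"
  using qlin_single[of xmon 0 1] by (simp add: xmon_zero)

definition vfield_image :: "('n::finite, 'k::comm_ring_1) vfield \<Rightarrow> (('n, 'k) tgen, 'k) falg" where
  "vfield_image \<eta> = (\<Sum>p\<in>UNIV. \<Sum>k\<in>Poly_Mapping.keys (\<eta> p). scal (Poly_Mapping.lookup (\<eta> p) k) * phiV k p)"

abbreviation vimg :: "('n::finite, 'k::comm_ring_1) vfield \<Rightarrow> ('n, 'k) weyl_lplus" where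
  "vimg \<eta> \<equiv> abs_weyl_lplus (vfield_image \<eta>)"

lemma vimg_eq: "vimg \<eta> = (\<Sum>p\<in>UNIV. qlin (\<lambda>k. Phi k p) (\<eta> p))"
  by (simp add: vfield_image_def qlin_def abs_weyl_lplus_hom)

lemma vimg_add: "vimg (\<lambda>r. \<eta> r + \<xi> r) = vimg \<eta> + vimg \<xi>"
  by (simp add: vimg_eq qlin_add sum.distrib)

lemma vimg_smult: "vimg (smult_vf c \<eta>) = sc c * vimg \<eta>"
  by (simp add: vimg_eq smult_vf_def qlin_smult sum_distrib_left)

lemma vimg_vmon: "vimg (vmon p k c) = sc c * Phi k p"
proof -
  have "qlin T (if r = p then Poly_Mapping.single k c else 0) = (if r = p then sc c * T k else 0)" for T r
    by (simp add: qlin_single qlin_def)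
  then show ?thesis by (simp add: vimg_eq vmon_def)
qed

lemma commutator_vimg_qlin:
  "commutator (vimg \<eta>) (qlin xmon f) = qlin xmon (act \<eta> f :: ('n::finite, 'k::comm_ring_1) mpoly)"
proof -
  define B :: "('n, 'k) vfield \<Rightarrow> ('n, 'k) mpoly \<Rightarrow> ('n, 'k) weyl_lplus" where
    "B \<eta> f = commutator (vimg \<eta>) (qlin xmon f) - qlin xmon (act \<eta> f)" for \<eta> f
  have monomial: "B (vmon p k c) (Poly_Mapping.single l d) = 0" for p k c l d
    by (simp add: B_def vimg_vmon qlin_single act_vmon_single commutator_sc_left commutator_sc_right
        commutator_Phi_xmon sc_sc ac_simps)
  have add_left: "B (\<lambda>r. \<eta> r + \<xi> r) f = B \<eta> f + B \<xi> f" for \<eta> \<xi> f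
    by (simp add: B_def vimg_add act_add_left qlin_add commutator_add_left)
  have add_right: "B \<eta> (f + g) = B \<eta> f + B \<eta> g" for \<eta> f g
    by (simp add: B_def act_add_right qlin_add commutator_add_right)
  have single: "B \<eta> (Poly_Mapping.single l d) = 0" for \<eta> l d
    by (rule vfield_additive_eq_0[where V = "\<lambda>\<eta>. B \<eta> (Poly_Mapping.single l d)"]) (simp_all only: add_left monomial)
  have "B \<eta> f = 0"
    by (rule poly_mapping_additive_eq_0[where A = "B \<eta>"]) (simp_all only: add_right single)
  then show ?thesis by (simp add: B_def)
qed

lemma commutator_vimg:
  "commutator (vimg \<eta>) (vimg \<xi>) = vimg (lie \<eta> \<xi> :: ('n::finite, 'k::comm_ring_1) vfield)"
proof -
  define B :: "('n, 'k) vfield \<Rightarrow> ('n, 'k) vfield \<Rightarrow> ('n, 'k) weyl_lplus" where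
    "B \<eta> \<xi> = commutator (vimg \<eta>) (vimg \<xi>) - vimg (lie \<eta> \<xi>)" for \<eta> \<xi>
  have monomial: "B (vmon p k c) (vmon q l d) = 0" for p k c q l d
    by (simp add: B_def vimg_vmon lie_vmon vimg_add commutator_sc_left commutator_sc_right
        commutator_Phi right_diff_distrib sc_uminus sc_sc ac_simps)
  have add_left: "B (\<lambda>r. \<eta> r + \<eta>' r) \<xi> = B \<eta> \<xi> + B \<eta>' \<xi>" for \<eta> \<eta>' \<xi>
    by (simp add: B_def vimg_add lie_add_left commutator_add_left)
  have add_right: "B \<eta> (\<lambda>r. \<xi> r + \<xi>' r) = B \<eta> \<xi> + B \<eta> \<xi>'" for \<eta> \<xi> \<xi>'
    by (simp add: B_def vimg_add lie_add_right commutator_add_right)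
  have vmon_left: "B (vmon p k c) \<xi> = 0" for p k c \<xi>
    by (rule vfield_additive_eq_0[where V = "B (vmon p k c)"]) (simp_all only: add_right monomial)
  have "B \<eta> \<xi> = 0"
    by (rule vfield_additive_eq_0[where V = "\<lambda>\<eta>. B \<eta> \<xi>"]) (simp_all only: add_left vmon_left)
  then show ?thesis by (simp add: B_def)
qed

definition smash_gen_image :: "('n::finite, 'k::comm_ring_1) sgen \<Rightarrow> (('n, 'k) tgen, 'k) falg" where
  "smash_gen_image g = (case g of GA f \<Rightarrow> embA f | GV \<eta> \<Rightarrow> vfield_image \<eta>)"

lemma smash_relator_image:
  assumes "r \<in> smash_rel"
  shows "abs_weyl_lplus (falg_lift smash_gen_image r) = (0 :: ('n::finite, 'k::comm_ring_1) weyl_lplus)"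
  using assms unfolding smash_rel_def
  by (auto simp: falg_lift_diff falg_lift_mult falg_lift_gen falg_lift_scal falg_lift_one smash_gen_image_def
      abs_weyl_lplus_hom abs_embA qlin_add qlin_smult qlin_xmon_mult qlin_xmon_one vimg_add vimg_smult
      commutator_vimg[unfolded commutator_def] commutator_vimg_qlin[unfolded commutator_def])

theorem lemma3p3:
  fixes k0 :: "'n::finite \<Rightarrow>\<^sub>0 nat" and c0 :: "'k::field_char_0"
  assumes "alg_closed TYPE('k)"
  shows "\<exists>\<phi>. \<phi> \<in> ring_hom (SmashAlg :: (('n, 'k) sgen, 'k) falg set ring) (TargetAlg :: (('n, 'k) tgen, 'k) falg set ring)
            \<and> (\<forall>c::'k. \<phi> (cls smash_rel (scal c)) = cls target_rel (scal c))
            \<and> (\<forall>f :: ('n, 'k) mpoly. \<phi> (cls smash_rel (gen (GA f))) = cls target_rel (embA f))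
            \<and> (\<forall>(k :: 'n \<Rightarrow>\<^sub>0 nat) p. \<phi> (cls smash_rel (gen (GV (vfm k p))))
                   = cls target_rel (phiV k p))"
proof -
  have relators: "falg_lift smash_gen_image r \<in> genideal cls_ring (target_rel :: (('n, 'k) tgen, 'k) falg set)"
    if "r \<in> smash_rel" for r
    using smash_relator_image[OF that] abs_weyl_lplus_eq_iff[of "falg_lift smash_gen_image r" 0] by simp
  obtain \<phi> where \<phi>: "\<phi> \<in> ring_hom (presented (smash_rel :: (('n, 'k) sgen, 'k) falg set)) (presented target_rel)"
    "\<And>a. \<phi> (cls smash_rel a) = cls target_rel (falg_lift smash_gen_image a)"
    using presented_hom_exists[OF falg_lift_add falg_lift_mult falg_lift_one relators] by blast
  have "cls target_rel (vfield_image (vfm k p)) = cls target_rel (phiV k p :: (('n, 'k) tgen, 'k) falg)" for k p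
    by (rule cls_target_rel_eqI) (simp add: vfm_vmon vimg_vmon)
  with \<phi> show ?thesis
    unfolding SmashAlg_def TargetAlg_def by (auto simp: falg_lift_scal falg_lift_gen smash_gen_image_def)
qed

end
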